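(* Let $\{(\mathscr A,\kappa),(\mathrm a,\alpha),(\tilde{\mathrm a},\tilde\alpha)\}$ be a covariant structure. For $x,y\in{\sf G}$, $\xi,\eta\in\tilde{\sf G}$ set $$\overrightarrow{\mathrm a}_{(x,\xi)}:=\tilde{\mathrm a}_\xi\circ\mathrm a_x,\qquad \overrightarrow{\alpha}\big((x,\xi),(y,\eta)\big):=\tilde{\mathrm a}_\xi[\kappa(x,\eta)]\,\tilde\alpha(\xi,\eta)\,\tilde{\mathrm a}_{\xi\eta}[\alpha(x,y)].$$ Then $(\overrightarrow{\mathrm a},\overrightarrow{\alpha})$ is a measurable twisted action of the product group ${\sf G}\times\tilde{\sf G}$ on $\mathscr A$. If $(\mathrm a,\alpha)$ and $(\tilde{\mathrm a},\tilde\alpha)$ are continuous, then $(\overrightarrow{\mathrm a},\overrightarrow{\alpha})$ is continuous.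
   Context: ${\sf G}$ and $\tilde{\sf G}$ are second countable locally compact groups with units ${\sf e}$ and $\varepsilon$. $\mathscr A$ is a separable C*-algebra with multiplier algebra $\mathcal M(\mathscr A)$ and unitary group $\mathcal{UM}(\mathscr A)$; automorphisms extend to $\mathcal M(\mathscr A)$, and $\mathrm{ad}_m(A):=mAm^*$. A twisted action of a locally compact group $K$ (unit $e_K$) on $\mathscr A$ is a pair $(\mathrm a,\alpha)$ with $\mathrm a:K\to\mathrm{Aut}(\mathscr A)$, $\alpha:K\times K\to\mathcal{UM}(\mathscr A)$ such that $\mathrm a_{e_K}=\mathrm{id}$, $\mathrm a_x\circ\mathrm a_y=\mathrm{ad}_{\alpha(x,y)}\circ\mathrm a_{xy}$, $\alpha(x,e_K)=1=\alpha(e_K,x)$ and $\alpha(x,y)\alpha(xy,z)=\mathrm a_x[\alpha(y,z)]\alpha(x,yz)$. It is measurable if $\mathrm a$ is strongly measurable and $\alpha$ strictly measurable; continuous if $\mathrm a$ is strongly continuous and $\alpha$ strictly continuous. A covariant structure $\{(\mathscr A,\kappa),(\mathrm a,\alpha),(\tilde{\mathrm a},\tilde\alpha)\}$ consists of measurable twisted actions $(\mathrm a,\alpha)$ of ${\sf G}$ and $(\tilde{\mathrm a},\tilde\alpha)$ of $\tilde{\sf G}$ on $\mathscr A$ and a strictly continuous $\kappa:{\sf G}\times\tilde{\sf G}\to\mathcal{UM}(\mathscr A)$ with $\kappa({\sf e},\xi)=1=\kappa(x,\varepsilon)$, such that for all $x,y\in{\sf G}$, $\xi,\eta\in\tilde{\sf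 G}$: (C1) $\mathrm a_x\circ\tilde{\mathrm a}_\xi=\mathrm{ad}_{\kappa(x,\xi)}\circ\tilde{\mathrm a}_\xi\circ\mathrm a_x$; (C2) $\mathrm a_x[\tilde\alpha(\xi,\eta)]=\kappa(x,\xi)\,\tilde{\mathrm a}_\xi[\kappa(x,\eta)]\,\tilde\alpha(\xi,\eta)\,\kappa(x,\xi\eta)^*$; (C3) $\tilde{\mathrm a}_\xi[\alpha(x,y)]=\kappa(x,\xi)^*\,\mathrm a_x[\kappa(y,\xi)^*]\,\alpha(x,y)\,\kappa(xy,\xi)$. *)

theory Defs
  imports "HOL-Analysis.Analysis"
begin

section \<open>Separable C*-algebras (complex, not necessarily unital)\<close>

text \<open>Separability is second countability of the norm topology.\<close>

class cstar_algebra = real_normed_algebra + banach + second_countable_topology +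
  fixes cscale :: "complex \<Rightarrow> 'a \<Rightarrow> 'a"
    and cstar :: "'a \<Rightarrow> 'a"
  assumes cscale_of_real: "cscale (complex_of_real r) x = r *\<^sub>R x"
    and cscale_mult: "cscale (c * d) x = cscale c (cscale d x)"
    and cscale_add_left: "cscale (c + d) x = cscale c x + cscale d x"
    and cscale_add_right: "cscale c (x + y) = cscale c x + cscale c y"
    and norm_cscale: "norm (cscale c x) = cmod c * norm x"
    and cscale_mult_left: "cscale c (x * y) = cscale c x * y"
    and cscale_mult_right: "cscale c (x * y) = x * cscale c y"
    and cstar_cstar: "cstar (cstar x) = x"
    and cstar_add: "cstar (x + y) = cstar x + cstar y"
    and cstar_cscale: "cstar (cscale c x) = cscale (cnj c) (cstar x)"
    and cstar_mult: "cstar (x * y) = cstar y * cstar x"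
    and cstar_identity: "norm (cstar x * x) = (norm x)\<^sup>2"

section \<open>The multiplier algebra, realised as double centralizers (L,R)\<close>

type_synonym 'a multiplier = "('a \<Rightarrow> 'a) \<times> ('a \<Rightarrow> 'a)"

definition is_multiplier :: "'a::cstar_algebra multiplier \<Rightarrow> bool" where
  "is_multiplier m \<longleftrightarrow> (\<forall>x y. x * fst m y = snd m x * y)"

definition mmult :: "'a::cstar_algebra multiplier \<Rightarrow> 'a multiplier \<Rightarrow> 'a multiplier" where
  "mmult m n = (fst m \<circ> fst n, snd n \<circ> snd m)"

definition mstar :: "'a::cstar_algebra multiplier \<Rightarrow> 'a multiplier" where
  "mstar m = (cstar \<circ> snd m \<circ> cstar, cstar \<circ> fst m \<circ> cstar)"

definition mone :: "'a::cstar_algebra multiplier" where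
  "mone = (id, id)"

definition unitary_mult :: "'a::cstar_algebra multiplier \<Rightarrow> bool" where
  "unitary_mult m \<longleftrightarrow> is_multiplier m \<and> mmult m (mstar m) = mone \<and> mmult (mstar m) m = mone"

definition is_aut :: "('a::cstar_algebra \<Rightarrow> 'a) \<Rightarrow> bool" where
  "is_aut f \<longleftrightarrow> bij f \<and> (\<forall>x y. f (x + y) = f x + f y) \<and> (\<forall>c x. f (cscale c x) = cscale c (f x))
     \<and> (\<forall>x y. f (x * y) = f x * f y) \<and> (\<forall>x. f (cstar x) = cstar (f x))"

definition aut_ext :: "('a::cstar_algebra \<Rightarrow> 'a) \<Rightarrow> 'a multiplier \<Rightarrow> 'a multiplier" where
  "aut_ext f m = (f \<circ> fst m \<circ> inv f, f \<circ> snd m \<circ> inv f)"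

text \<open>ad_m (A) = m A m^* \<close>
definition ad :: "'a::cstar_algebra multiplier \<Rightarrow> 'a \<Rightarrow> 'a" where
  "ad m = fst m \<circ> snd (mstar m)"

section \<open>Second countable locally compact (Hausdorff) groups, written additively\<close>

class lcsc_group = topological_group_add + second_countable_topology + t2_space +
  assumes locally_compact: "\<And>x::'a. \<exists>U K. open U \<and> compact K \<and> x \<in> U \<and> U \<subseteq> K"

definition twisted_action ::
  "('k::group_add \<Rightarrow> 'a::cstar_algebra \<Rightarrow> 'a) \<Rightarrow> ('k \<Rightarrow> 'k \<Rightarrow> 'a multiplier) \<Rightarrow> bool" where
  "twisted_action a \<alpha> \<longleftrightarrow>
     (\<forall>x. is_aut (a x)) \<and> (\<forall>x y. unitary_mult (\<alpha> x y)) \<and>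
     a 0 = id \<and>
     (\<forall>x y. a x \<circ> a y = ad (\<alpha> x y) \<circ> a (x + y)) \<and>
     (\<forall>x. \<alpha> x 0 = mone \<and> \<alpha> 0 x = mone) \<and>
     (\<forall>x y z. mmult (\<alpha> x y) (\<alpha> (x + y) z) = mmult (aut_ext (a x) (\<alpha> y z)) (\<alpha> x (y + z)))"

text \<open>Strong measurability/continuity of a map into Aut(A): pointwise in A (norm topology).
 Strict measurability/continuity of a map into M(A): m \<mapsto> m A and m \<mapsto> A m, pointwise in A.\<close>

definition strongly_measurable :: "('k::topological_space \<Rightarrow> 'a::cstar_algebra \<Rightarrow> 'a) \<Rightarrow> bool" where
  "strongly_measurable a \<longleftrightarrow> (\<forall>A. (\<lambda>x. a x A) \<in> borel_measurable borel)"

definition strictly_measurable :: "('t::topological_space \<Rightarrow> 'a::cstar_algebra multiplier) \<Rightarrow> bool" where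
  "strictly_measurable m \<longleftrightarrow>
     (\<forall>A. (\<lambda>t. fst (m t) A) \<in> borel_measurable borel \<and> (\<lambda>t. snd (m t) A) \<in> borel_measurable borel)"

definition strongly_continuous :: "('k::topological_space \<Rightarrow> 'a::cstar_algebra \<Rightarrow> 'a) \<Rightarrow> bool" where
  "strongly_continuous a \<longleftrightarrow> (\<forall>A. continuous_on UNIV (\<lambda>x. a x A))"

definition strictly_continuous :: "('t::topological_space \<Rightarrow> 'a::cstar_algebra multiplier) \<Rightarrow> bool" where
  "strictly_continuous m \<longleftrightarrow>
     (\<forall>A. continuous_on UNIV (\<lambda>t. fst (m t) A) \<and> continuous_on UNIV (\<lambda>t. snd (m t) A))"

definition measurable_twisted_action ::
  "('k::{group_add,topological_space} \<Rightarrow> 'a::cstar_algebra \<Rightarrow> 'a) \<Rightarrow> ('k \<Rightarrow> 'k \<Rightarrow> 'a multiplier) \<Rightarrow> bool" where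
  "measurable_twisted_action a \<alpha> \<longleftrightarrow>
     twisted_action a \<alpha> \<and> strongly_measurable a \<and> strictly_measurable (\<lambda>(x, y). \<alpha> x y)"

definition continuous_twisted_action ::
  "('k::{group_add,topological_space} \<Rightarrow> 'a::cstar_algebra \<Rightarrow> 'a) \<Rightarrow> ('k \<Rightarrow> 'k \<Rightarrow> 'a multiplier) \<Rightarrow> bool" where
  "continuous_twisted_action a \<alpha> \<longleftrightarrow>
     twisted_action a \<alpha> \<and> strongly_continuous a \<and> strictly_continuous (\<lambda>(x, y). \<alpha> x y)"

definition covariant_structure ::
  "('g::lcsc_group \<Rightarrow> 'a::cstar_algebra \<Rightarrow> 'a) \<Rightarrow> ('g \<Rightarrow> 'g \<Rightarrow> 'a multiplier) \<Rightarrow>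
   ('h::lcsc_group \<Rightarrow> 'a \<Rightarrow> 'a) \<Rightarrow> ('h \<Rightarrow> 'h \<Rightarrow> 'a multiplier) \<Rightarrow>
   ('g \<Rightarrow> 'h \<Rightarrow> 'a multiplier) \<Rightarrow> bool" where
  "covariant_structure a \<alpha> ta \<alpha>t \<kappa> \<longleftrightarrow>
     measurable_twisted_action a \<alpha> \<and> measurable_twisted_action ta \<alpha>t \<and>
     (\<forall>x \<xi>. unitary_mult (\<kappa> x \<xi>)) \<and> strictly_continuous (\<lambda>(x, \<xi>). \<kappa> x \<xi>) \<and>
     (\<forall>\<xi>. \<kappa> 0 \<xi> = mone) \<and> (\<forall>x. \<kappa> x 0 = mone) \<and>
     (\<forall>x \<xi>. a x \<circ> ta \<xi> = ad (\<kappa> x \<xi>) \<circ> ta \<xi> \<circ> a x) \<and>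
     (\<forall>x \<xi> \<eta>. aut_ext (a x) (\<alpha>t \<xi> \<eta>) =
        mmult (mmult (mmult (\<kappa> x \<xi>) (aut_ext (ta \<xi>) (\<kappa> x \<eta>))) (\<alpha>t \<xi> \<eta>)) (mstar (\<kappa> x (\<xi> + \<eta>)))) \<and>
     (\<forall>x y \<xi>. aut_ext (ta \<xi>) (\<alpha> x y) =
        mmult (mmult (mmult (mstar (\<kappa> x \<xi>)) (aut_ext (a x) (mstar (\<kappa> y \<xi>)))) (\<alpha> x y)) (\<kappa> (x + y) \<xi>))"

definition prod_act ::
  "('g \<Rightarrow> 'a::cstar_algebra \<Rightarrow> 'a) \<Rightarrow> ('h \<Rightarrow> 'a \<Rightarrow> 'a) \<Rightarrow> 'g \<times> 'h \<Rightarrow> 'a \<Rightarrow> 'a" where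
  "prod_act a ta p = ta (snd p) \<circ> a (fst p)"

definition prod_cocycle ::
  "('g::plus \<Rightarrow> 'g \<Rightarrow> 'a::cstar_algebra multiplier) \<Rightarrow> ('h::plus \<Rightarrow> 'a \<Rightarrow> 'a) \<Rightarrow> ('h \<Rightarrow> 'h \<Rightarrow> 'a multiplier) \<Rightarrow>
   ('g \<Rightarrow> 'h \<Rightarrow> 'a multiplier) \<Rightarrow> 'g \<times> 'h \<Rightarrow> 'g \<times> 'h \<Rightarrow> 'a multiplier" where
  "prod_cocycle \<alpha> ta \<alpha>t \<kappa> p q =
     mmult (mmult (aut_ext (ta (snd p)) (\<kappa> (fst p) (snd q))) (\<alpha>t (snd p) (snd q)))
           (aut_ext (ta (snd p + snd q)) (\<alpha> (fst p) (fst q)))"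

end

theory Submission
  imports Defs
begin

text \<open>
  The algebraic half is a computation with multipliers: the twisted relation \<open>A\<^sub>p A\<^sub>q = Ad \<beta>(p,q) A\<^sub>p\<^sub>+\<^sub>q\<close>
  follows from (C1) and the relations of the two actions, and the cocycle identity for \<open>\<beta>\<close> is
  derived abstractly from (C2), (C3) and the two cocycle identities.

  The analytic half needs joint regularity of maps such as \<open>(p, q) \<mapsto> a~\<^sub>\<xi>(\<kappa>(x,\<eta>)(B))\<close>, i.e. of
  \<open>p \<mapsto> \<Phi>\<^sub>p(g(p))\<close> where both \<open>\<Phi>\<close> and \<open>g\<close> are regular. This works for nonexpansive families
  \<open>\<Phi>\<^sub>p\<close>, by a Carath\'eodory argument (measurable case) or an \<open>\<epsilon>/2\<close> argument (continuous case).
  Unitary multipliers act isometrically, and *-automorphisms are contractive; the latter is the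
  only non-trivial analytic input. Since the algebra has no unit, it is proved with
  quasi-inverses: a self-adjoint element of norm one has some \<open>z k\<close>, \<open>|z| \<le> 1\<close>, that is not
  quasi-invertible (its spectral radius is one), shown by averaging over roots of unity and a
  continuity argument along the radius.
\<close>

lemma cscale_minus_left: "cscale (- c) (x::'a::cstar_algebra) = - cscale c x"
  using cscale_add_left[of c "-c" x] cscale_of_real[of 0 x]
  by (simp add: eq_neg_iff_add_eq_0 add.commute)

lemma cscale_diff_left: "cscale (c - d) (x::'a::cstar_algebra) = cscale c x - cscale d x"
  using cscale_add_left[of c "-d" x] by (simp add: cscale_minus_left)

lemma scaleR_cscale: "r *\<^sub>R (x::'a::cstar_algebra) = cscale (complex_of_real r) x"
  by (simp add: cscale_of_real)

lemma cscale_sum_left: "cscale (\<Sum>i\<in>I. c i) (x::'a::cstar_algebra) = (\<Sum>i\<in>I. cscale (c i) x)"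
proof (induct I rule: infinite_finite_induct)
  case (infinite I)
  then show ?case using cscale_of_real[of 0 x] by simp
next
  case empty
  then show ?case using cscale_of_real[of 0 x] by simp
next
  case (insert i I)
  then show ?case by (simp add: cscale_add_left)
qed

lemma cscale_mult_both: "cscale c x * cscale d y = cscale (c * d) (x * (y::'a::cstar_algebra))"
  by (simp add: cscale_mult_left[symmetric] cscale_mult_right[symmetric] cscale_mult[symmetric] mult.commute)

lemma cstar_diff: "cstar (x - y::'a::cstar_algebra) = cstar x - cstar y"
proof -
  have zero: "cstar (0::'a) = 0"
    using cstar_add[of 0 0] by simp
  have minus: "cstar (- z) = - cstar z" for z :: 'a
  proof -
    have "0 = cstar z + cstar (- z)" using cstar_add[of z "-z"] zero by simp
    then show ?thesis by (simp add: eq_neg_iff_add_eq_0 add.commute)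
  qed
  show ?thesis using cstar_add[of x "-y"] by (simp add: minus)
qed

lemma cstar_scaleR: "cstar (r *\<^sub>R x::'a::cstar_algebra) = r *\<^sub>R cstar x"
  by (simp add: scaleR_cscale cstar_cscale)

lemma norm_cstar[simp]: "norm (cstar x) = norm (x::'a::cstar_algebra)"
proof -
  have le: "norm (cstar y) \<le> norm y" for y :: 'a
  proof -
    have "(norm (cstar y))\<^sup>2 = norm (y * cstar y)" by (simp add: cstar_identity[symmetric] cstar_cstar)
    also have "\<dots> \<le> norm y * norm (cstar y)" by (rule norm_mult_ineq)
    finally show ?thesis
      by (metis mult_right_le_imp_le norm_ge_zero order_le_less power2_eq_square)
  qed
  show ?thesis by (metis antisym le cstar_cstar)
qed

lemma nondeg_left:
  fixes a b :: "'a::cstar_algebra"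
  assumes "\<And>z. z * a = z * b" shows "a = b"
proof -
  have "cstar (a - b) * (a - b) = 0" using assms[of "cstar (a - b)"] by (simp add: algebra_simps)
  then have "(norm (a - b))\<^sup>2 = 0" by (simp add: cstar_identity[symmetric])
  then show ?thesis by simp
qed

lemma nondeg_right:
  fixes a b :: "'a::cstar_algebra"
  assumes "\<And>z. a * z = b * z" shows "a = b"
proof -
  have "(a - b) * cstar (a - b) = 0" using assms[of "cstar (a - b)"] by (simp add: algebra_simps)
  then have "(norm (cstar (a - b)))\<^sup>2 = 0" by (metis cstar_identity cstar_cstar norm_zero)
  then show ?thesis by simp
qed

section \<open>Quasi-inverses and the Neumann series\<close>

text \<open>The algebra need not be unital, so invertibility of \<open>1 - y\<close> is expressed through the
  quasi-product \<open>x \<circ> y = x + y - x y\<close> (that is, \<open>1 - x \<circ> y = (1 - x)(1 - y)\<close>): a quasi-inverse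
  of \<open>y\<close> is a two-sided inverse for this associative operation with neutral element \<open>0\<close>.\<close>

definition qprod :: "'a::cstar_algebra \<Rightarrow> 'a \<Rightarrow> 'a" where
  "qprod x y = x + y - x * y"

definition quasi_inverse :: "'a::cstar_algebra \<Rightarrow> 'a \<Rightarrow> bool" where
  "quasi_inverse y q \<longleftrightarrow> qprod y q = 0 \<and> qprod q y = 0"

lemma qprod_assoc: "qprod (qprod x y) z = qprod x (qprod y z)"
  by (simp add: qprod_def algebra_simps)

lemma qprod_zero_left[simp]: "qprod 0 x = x" and qprod_zero_right[simp]: "qprod x 0 = x"
  by (simp_all add: qprod_def)

lemma quasi_inverse_unique:
  assumes "quasi_inverse y q" "quasi_inverse y q'"
  shows "q = q'"
proof -
  have "q = qprod q (qprod y q')" using assms(2) by (simp add: quasi_inverse_def)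
  also have "\<dots> = qprod (qprod q y) q'" by (simp add: qprod_assoc)
  also have "\<dots> = q'" using assms(1) by (simp add: quasi_inverse_def qprod_def)
  finally show ?thesis .
qed

lemma quasi_inverse_qprod:
  assumes "quasi_inverse a qa" "quasi_inverse b qb"
  shows "quasi_inverse (qprod a b) (qprod qb qa)"
proof -
  have "qprod (qprod a b) (qprod qb qa) = qprod a (qprod (qprod b qb) qa)" by (simp add: qprod_assoc)
  also have "\<dots> = 0" using assms by (simp add: quasi_inverse_def qprod_def)
  finally have left: "qprod (qprod a b) (qprod qb qa) = 0" .
  have "qprod (qprod qb qa) (qprod a b) = qprod qb (qprod (qprod qa a) b)" by (simp add: qprod_assoc)
  also have "\<dots> = 0" using assms by (simp add: quasi_inverse_def qprod_def)
  finally show ?thesis using left by (simp add: quasi_inverse_def)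
qed

text \<open>Powers with positive exponent: \<open>succ_pow x n = x ^ (n + 1)\<close>.\<close>

fun succ_pow :: "'a::cstar_algebra \<Rightarrow> nat \<Rightarrow> 'a" where
  "succ_pow x 0 = x"
| "succ_pow x (Suc n) = x * succ_pow x n"

lemma succ_pow_commute: "succ_pow x n * x = x * succ_pow x n"
  by (induct n) (simp_all add: mult.assoc)

lemma succ_pow_add: "succ_pow x (Suc (m + n)) = succ_pow x m * succ_pow x n"
  by (induct m) (simp_all add: mult.assoc)

lemma norm_succ_pow: "norm (succ_pow x n) \<le> norm x ^ Suc n"
proof (induct n)
  case (Suc n)
  have "norm (succ_pow x (Suc n)) \<le> norm x * norm (succ_pow x n)" by (simp add: norm_mult_ineq)
  also have "\<dots> \<le> norm x * norm x ^ Suc n" by (rule mult_left_mono[OF Suc]) simp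
  finally show ?case by simp
qed simp

lemma succ_pow_cscale: "succ_pow (cscale c x) n = cscale (c ^ Suc n) (succ_pow x n)"
  by (induct n) (simp_all add: cscale_mult_both)

lemma cstar_succ_pow: "cstar x = x \<Longrightarrow> cstar (succ_pow x n) = succ_pow x n"
  by (induct n) (simp_all add: cstar_mult succ_pow_commute)

lemma neumann:
  fixes y :: "'a::cstar_algebra"
  assumes y: "norm y < 1"
  shows "\<exists>q. quasi_inverse y q \<and> norm q \<le> norm y / (1 - norm y)"
proof -
  have sg: "summable (\<lambda>n. norm y ^ Suc n)" using y by (simp add: summable_geometric)
  have sn: "summable (\<lambda>n. norm (succ_pow y n))"
    by (rule summable_comparison_test[OF _ sg]) (use norm_succ_pow[of y] in auto)
  have s: "summable (\<lambda>n. succ_pow y n)" by (rule summable_norm_cancel[OF sn])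
  define S where "S = (\<Sum>n. succ_pow y n)"
  have tail: "(\<Sum>n. succ_pow y (Suc n)) = S - y"
    unfolding S_def using suminf_split_head[OF s] by simp
  have left: "y * S = S - y"
    unfolding S_def using suminf_mult[OF s, of y] tail[unfolded S_def] by simp
  have right: "S * y = S - y"
    unfolding S_def using suminf_mult2[OF s, of y] tail[unfolded S_def] by (simp add: succ_pow_commute)
  have "quasi_inverse y (- S)"
    unfolding quasi_inverse_def qprod_def using left right by (simp add: algebra_simps)
  moreover have "norm (- S) \<le> norm y / (1 - norm y)"
  proof -
    have "norm S \<le> (\<Sum>n. norm (succ_pow y n))" unfolding S_def by (rule summable_norm[OF sn])
    also have "\<dots> \<le> (\<Sum>n. norm y ^ Suc n)"
      by (rule suminf_le[OF _ sn sg]) (use norm_succ_pow[of y] in simp)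
    also have "\<dots> = norm y * (\<Sum>n. norm y ^ n)"
      using suminf_mult[OF summable_geometric[of "norm y"], of "norm y"] y by simp
    also have "\<dots> = norm y / (1 - norm y)"
      using suminf_geometric[of "norm y"] y by simp
    finally show ?thesis by simp
  qed
  ultimately show ?thesis by blast
qed

lemma quasi_inverse_bound:
  assumes "quasi_inverse y q" "norm y < 1"
  shows "norm q \<le> norm y / (1 - norm y)"
  using neumann[OF assms(2)] quasi_inverse_unique[OF assms(1)] by blast

text \<open>Stability of quasi-invertibility under small perturbations, with an explicit bound on
  the change of the quasi-inverse; this gives continuity of \<open>y \<mapsto> y\<^sup>-\<^sup>1\<close>.\<close>

lemma quasi_inverse_perturb:
  fixes y0 q0 y :: "'a::cstar_algebra"
  assumes q0: "quasi_inverse y0 q0" and small: "norm (y - y0) * (1 + norm q0) < 1"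
  shows "\<exists>q. quasi_inverse y q \<and> norm (q - q0) \<le> (1 + norm q0) * (norm (y - y0) * (1 + norm q0)
             / (1 - norm (y - y0) * (1 + norm q0)))"
proof -
  define d where "d = y - y0"
  define e where "e = d - q0 * d"
  have ne: "norm e \<le> norm d * (1 + norm q0)"
  proof -
    have "norm e \<le> norm d + norm (q0 * d)" unfolding e_def by (rule norm_triangle_ineq4)
    also have "\<dots> \<le> norm d + norm q0 * norm d" by (simp add: norm_mult_ineq)
    finally show ?thesis by (simp add: algebra_simps)
  qed
  have e1: "norm e < 1" using ne small unfolding d_def by linarith
  obtain qe where qe: "quasi_inverse e qe" "norm qe \<le> norm e / (1 - norm e)"
    using neumann[OF e1] by blast
  have "y = qprod y0 e"
  proof -
    have "qprod y0 e = y0 + d - (q0 + y0 - y0 * q0) * d"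
      unfolding qprod_def e_def by (simp add: algebra_simps)
    also have "q0 + y0 - y0 * q0 = 0"
      using q0 unfolding quasi_inverse_def qprod_def by (simp add: algebra_simps)
    finally show ?thesis unfolding d_def by simp
  qed
  then have "quasi_inverse y (qprod qe q0)" using quasi_inverse_qprod[OF q0 qe(1)] by simp
  moreover have "norm (qprod qe q0 - q0) \<le> (1 + norm q0) * (norm d * (1 + norm q0) / (1 - norm d * (1 + norm q0)))"
  proof -
    have "norm (qprod qe q0 - q0) \<le> norm qe + norm (qe * q0)"
      by (simp add: qprod_def norm_triangle_ineq4)
    also have "\<dots> \<le> (1 + norm q0) * norm qe"
      using norm_mult_ineq[of qe q0] by (simp add: algebra_simps)
    also have "\<dots> \<le> (1 + norm q0) * (norm e / (1 - norm e))"
      by (rule mult_left_mono[OF qe(2)]) simp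
    also have "\<dots> \<le> (1 + norm q0) * (norm d * (1 + norm q0) / (1 - norm d * (1 + norm q0)))"
      using ne small unfolding d_def by (intro mult_left_mono frac_le) auto
    finally show ?thesis .
  qed
  ultimately show ?thesis unfolding d_def by blast
qed

lemma quasi_inverse_small:
  fixes y q :: "'a::cstar_algebra"
  assumes "quasi_inverse y q" "norm q \<le> 1/3"
  shows "norm y \<le> 1/2"
proof -
  have "q + y - q * y = 0" using assms(1) by (simp add: quasi_inverse_def qprod_def)
  then have "y = q * y - q" by (simp add: algebra_simps)
  then have "norm y \<le> norm (q * y) + norm q" by (metis norm_triangle_ineq4)
  also have "\<dots> \<le> norm q * norm y + norm q" by (simp add: norm_mult_ineq)
  finally have "norm y \<le> norm q * norm y + norm q" .
  moreover have "norm q * norm y \<le> 1/3 * norm y" using assms(2) by (rule mult_right_mono) simp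
  ultimately show ?thesis using assms(2) by linarith
qed

text \<open>If every \<open>c \<omega>\<^sup>j k\<close> (\<open>\<omega>\<close> a primitive \<open>(n+1)\<close>-st root of unity) is quasi-invertible, then so
  is \<open>(c k)\<^sup>n\<^sup>+\<^sup>1\<close>, and its quasi-inverse is the average of the individual ones.\<close>

definition root_unity :: "nat \<Rightarrow> complex" where
  "root_unity n = exp (\<i> * complex_of_real (2 * pi / real (Suc n)))"

lemma norm_root_unity_pow[simp]: "cmod (root_unity n ^ j) = 1"
  by (simp add: root_unity_def norm_power)

lemma root_unity_pow_Suc: "root_unity n ^ Suc n = 1"
proof -
  have "root_unity n ^ Suc n = exp (of_nat (Suc n) * (\<i> * complex_of_real (2 * pi / real (Suc n))))"
    unfolding root_unity_def by (rule exp_of_nat_mult[symmetric])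
  also have "of_nat (Suc n) * (\<i> * complex_of_real (2 * pi / real (Suc n))) = (2 * 1 * pi) * \<i>"
  proof -
    have "1 + (of_nat n::complex) \<noteq> 0"
      by (metis of_nat_Suc of_nat_eq_0_iff nat.distinct(1) add.commute)
    then show ?thesis by (simp add: field_simps)
  qed
  also have "exp \<dots> = 1" by (rule exp_integer_2pi) simp
  finally show ?thesis .
qed

text \<open>For \<open>0 < m + 1 < n + 1\<close>, the power \<open>\<omega>\<^sup>m\<^sup>+\<^sup>1\<close> is a non-trivial root of unity, so the
  geometric sum of its powers vanishes.\<close>

lemma root_unity_power_sum:
  assumes m: "m < n"
  shows "(\<Sum>j<Suc n. (root_unity n ^ Suc m) ^ j) = 0"
proof -
  define w where "w = root_unity n ^ Suc m"
  have wN: "w ^ Suc n = 1" unfolding w_def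
    by (metis root_unity_pow_Suc power_mult power_mult_distrib mult.commute power_one)
  have w1: "w \<noteq> 1"
  proof
    assume "w = 1"
    then have "exp (of_nat (Suc m) * (\<i> * complex_of_real (2 * pi / real (Suc n)))) = 1"
      unfolding w_def root_unity_def by (simp only: exp_of_nat_mult)
    then obtain i :: int
      where "Im (of_nat (Suc m) * (\<i> * complex_of_real (2 * pi / real (Suc n)))) = of_int (2 * i) * pi"
      unfolding exp_eq_1 by blast
    then have h: "real (Suc m) * (2 * pi / real (Suc n)) = 2 * real_of_int i * pi" by simp
    have "real (Suc m) = (real (Suc m) * (2 * pi / real (Suc n))) * real (Suc n) / (2 * pi)"
      by (simp del: of_nat_Suc)
    also have "\<dots> = real_of_int i * real (Suc n)" unfolding h by (simp del: of_nat_Suc)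
    finally have e: "int (Suc m) = i * int (Suc n)"
      by (metis of_int_eq_iff of_int_mult of_int_of_nat_eq)
    then have "0 < i" by (smt (verit) mult_nonpos_nonneg of_nat_0_le_iff of_nat_Suc)
    then have "int (Suc n) \<le> i * int (Suc n)" by simp
    then show False using e m by linarith
  qed
  show ?thesis using sum_gp_strict[of w "Suc n"] w1 wN unfolding w_def by simp
qed

lemma qprod_neg_partial_sum:
  "qprod y (- (\<Sum>m<n. succ_pow y m)) = succ_pow y n \<and> qprod (- (\<Sum>m<n. succ_pow y m)) y = succ_pow y n"
proof (induct n)
  case (Suc n)
  have c: "y * (\<Sum>m<n. succ_pow y m) = (\<Sum>m<n. succ_pow y m) * y"
    by (simp add: sum_distrib_left sum_distrib_right succ_pow_commute)
  have "qprod y (- (\<Sum>m<Suc n. succ_pow y m)) = qprod y (- (\<Sum>m<n. succ_pow y m)) - succ_pow y n + y * succ_pow y n"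
    by (simp add: qprod_def algebra_simps)
  also have "\<dots> = succ_pow y (Suc n)" using Suc by simp
  finally have 1: "qprod y (- (\<Sum>m<Suc n. succ_pow y m)) = succ_pow y (Suc n)" .
  have "qprod (- (\<Sum>m<Suc n. succ_pow y m)) y = qprod y (- (\<Sum>m<Suc n. succ_pow y m))"
    using c by (simp add: qprod_def algebra_simps succ_pow_commute)
  then show ?case using 1 by simp
qed (simp add: qprod_def)

lemma quasi_inverse_qprod_succ_pow:
  assumes q: "quasi_inverse y q"
  shows "qprod q (succ_pow y n) = - (\<Sum>m<n. succ_pow y m)"
    and "qprod (succ_pow y n) q = - (\<Sum>m<n. succ_pow y m)"
proof -
  define P where "P = - (\<Sum>m<n. succ_pow y m)"
  have a: "qprod y P = succ_pow y n" "qprod P y = succ_pow y n"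
    using qprod_neg_partial_sum[of y n] unfolding P_def by auto
  have "qprod q (succ_pow y n) = qprod (qprod q y) P" unfolding a(1)[symmetric] by (simp add: qprod_assoc)
  then show "qprod q (succ_pow y n) = P" using q by (simp add: quasi_inverse_def)
  have "qprod (succ_pow y n) q = qprod P (qprod y q)" unfolding a(2)[symmetric] by (simp add: qprod_assoc)
  then show "qprod (succ_pow y n) q = P" using q by (simp add: quasi_inverse_def)
qed

lemma root_unity_partial_sums_vanish:
  "(\<Sum>j<Suc n. \<Sum>m<n. succ_pow (cscale (c * root_unity n ^ j) k) m) = 0"
proof -
  have pw: "(c * root_unity n ^ j) ^ Suc m = c ^ Suc m * (root_unity n ^ Suc m) ^ j" for j m
    by (simp only: power_mult_distrib) (metis power_mult mult.commute)
  have "(\<Sum>j<Suc n. \<Sum>m<n. succ_pow (cscale (c * root_unity n ^ j) k) m)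
      = (\<Sum>m<n. \<Sum>j<Suc n. cscale ((c * root_unity n ^ j) ^ Suc m) (succ_pow k m))"
    unfolding succ_pow_cscale by (rule sum.swap)
  also have "\<dots> = (\<Sum>m<n. cscale (c ^ Suc m * (\<Sum>j<Suc n. (root_unity n ^ Suc m) ^ j)) (succ_pow k m))"
    by (simp only: cscale_sum_left[symmetric] pw sum_distrib_left)
  also have "\<dots> = 0"
  proof (rule sum.neutral, rule ballI)
    fix m assume "m \<in> {..<n}"
    then have "(\<Sum>j<Suc n. (root_unity n ^ Suc m) ^ j) = 0" by (intro root_unity_power_sum) simp
    then show "cscale (c ^ Suc m * (\<Sum>j<Suc n. (root_unity n ^ Suc m) ^ j)) (succ_pow k m) = 0"
      using cscale_of_real[of 0 "succ_pow k m"] by simp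
  qed
  finally show ?thesis .
qed

lemma quasi_inverse_average:
  fixes Y :: "'a::cstar_algebra"
  assumes qp: "\<And>j. j < Suc n \<Longrightarrow> qprod (q j) Y = p j \<and> qprod Y (q j) = p j"
    and sum0: "(\<Sum>j<Suc n. p j) = 0"
  shows "quasi_inverse Y ((1 / real (Suc n)) *\<^sub>R (\<Sum>j<Suc n. q j))"
proof -
  define Sq where "Sq = (\<Sum>j<Suc n. q j)"
  have e1: "Sq + real (Suc n) *\<^sub>R Y - Sq * Y = 0"
  proof -
    have "0 = (\<Sum>j<Suc n. qprod (q j) Y)" using qp sum0 by (metis (no_types, lifting) lessThan_iff sum.cong)
    also have "\<dots> = Sq + real (Suc n) *\<^sub>R Y - Sq * Y"
      unfolding Sq_def qprod_def
      by (simp del: sum.lessThan_Suc add: sum.distrib sum_subtractf sum_distrib_right sum_constant_scaleR)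
    finally show ?thesis by simp
  qed
  have e2: "Sq + real (Suc n) *\<^sub>R Y - Y * Sq = 0"
  proof -
    have "0 = (\<Sum>j<Suc n. qprod Y (q j))" using qp sum0 by (metis (no_types, lifting) lessThan_iff sum.cong)
    also have "\<dots> = Sq + real (Suc n) *\<^sub>R Y - Y * Sq"
      unfolding Sq_def qprod_def
      by (simp del: sum.lessThan_Suc add: sum.distrib sum_subtractf sum_distrib_left sum_constant_scaleR algebra_simps)
    finally show ?thesis by simp
  qed
  have N: "(1 / real (Suc n)) * real (Suc n) = 1" by (simp del: of_nat_Suc)
  have "qprod ((1 / real (Suc n)) *\<^sub>R Sq) Y = (1 / real (Suc n)) *\<^sub>R (Sq + real (Suc n) *\<^sub>R Y - Sq * Y)"
    unfolding qprod_def
    by (simp only: scaleR_add_right scaleR_diff_right scaleR_scaleR N scaleR_one mult_scaleR_left)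
  moreover have "qprod Y ((1 / real (Suc n)) *\<^sub>R Sq) = (1 / real (Suc n)) *\<^sub>R (Sq + real (Suc n) *\<^sub>R Y - Y * Sq)"
    unfolding qprod_def
    by (simp only: scaleR_add_right scaleR_diff_right scaleR_scaleR N scaleR_one mult_scaleR_right add.commute)
  ultimately show ?thesis using e1 e2 unfolding quasi_inverse_def Sq_def by simp
qed

lemma quasi_inverse_root_average:
  fixes k :: "'a::cstar_algebra"
  assumes q: "\<And>j. j < Suc n \<Longrightarrow> quasi_inverse (cscale (c * root_unity n ^ j) k) (q j)"
  shows "quasi_inverse (cscale (c ^ Suc n) (succ_pow k n)) ((1 / real (Suc n)) *\<^sub>R (\<Sum>j<Suc n. q j))"
proof (rule quasi_inverse_average)
  define y where "y j = cscale (c * root_unity n ^ j) k" for j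
  have "(c * root_unity n ^ j) ^ Suc n = c ^ Suc n" for j
    by (metis power_mult_distrib power_mult mult.commute root_unity_pow_Suc power_one mult_1_right)
  then have Y: "succ_pow (y j) n = cscale (c ^ Suc n) (succ_pow k n)" for j
    unfolding y_def by (simp only: succ_pow_cscale)
  show "qprod (q j) (cscale (c ^ Suc n) (succ_pow k n)) = - (\<Sum>m<n. succ_pow (y j) m)
      \<and> qprod (cscale (c ^ Suc n) (succ_pow k n)) (q j) = - (\<Sum>m<n. succ_pow (y j) m)"
    if "j < Suc n" for j
    using quasi_inverse_qprod_succ_pow[OF q[OF that, folded y_def], of n] unfolding Y by blast
  show "(\<Sum>j<Suc n. - (\<Sum>m<n. succ_pow (y j) m)) = 0"
    unfolding sum_negf y_def root_unity_partial_sums_vanish by simp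
qed

text \<open>The quasi-inverse as a function, meaningful on quasi-invertible elements.\<close>

definition qinv_of :: "'a::cstar_algebra \<Rightarrow> 'a" where
  "qinv_of y = (THE q. quasi_inverse y q)"

lemma quasi_inverse_qinv_of: "quasi_inverse y q \<Longrightarrow> quasi_inverse y (qinv_of y)"
  unfolding qinv_of_def by (metis (mono_tags) theI quasi_inverse_unique)

lemma qinv_of_continuous:
  "continuous_on {y::'a::cstar_algebra. \<exists>q. quasi_inverse y q} qinv_of"
  unfolding continuous_on_iff
proof (intro ballI allI impI)
  fix y0 :: 'a and e :: real
  assume "y0 \<in> {y. \<exists>q. quasi_inverse y q}" and e: "0 < e"
  then obtain q0 where q0: "quasi_inverse y0 q0" "qinv_of y0 = q0"
    using quasi_inverse_qinv_of quasi_inverse_unique by blast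
  define C where "C = 1 + norm q0"
  have C: "C \<ge> 1" unfolding C_def by simp
  define d where "d = min (1 / (2 * C)) (e / (2 * C^2))"
  have d: "d > 0" unfolding d_def using C e by simp
  show "\<exists>d>0. \<forall>y\<in>{y. \<exists>q. quasi_inverse y q}. dist y y0 < d \<longrightarrow> dist (qinv_of y) (qinv_of y0) < e"
  proof (intro exI[of _ d] conjI d ballI impI)
    fix y assume dy: "dist y y0 < d"
    define t where "t = norm (y - y0)"
    have tC: "t * C < 1/2" using dy C unfolding d_def t_def dist_norm by (simp add: field_simps)
    have t0: "t \<ge> 0" unfolding t_def by simp
    obtain q where q: "quasi_inverse y q" "norm (q - q0) \<le> C * (t * C / (1 - t * C))"
      using quasi_inverse_perturb[OF q0(1), of y] tC unfolding t_def C_def by auto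
    have "qinv_of y = q" using quasi_inverse_qinv_of[OF q(1)] q(1) by (rule quasi_inverse_unique)
    have "norm (q - q0) \<le> C * (2 * (t * C))"
    proof -
      have u0: "0 \<le> t * C" using t0 C by simp
      have "t * C * (2 * (t * C)) \<le> t * C * 1" by (rule mult_left_mono) (use tC u0 in auto)
      then have "t * C \<le> 2 * (t * C) * (1 - t * C)" by (simp add: algebra_simps)
      then have "t * C / (1 - t * C) \<le> 2 * (t * C)"
        using tC by (subst pos_divide_le_eq) auto
      then show ?thesis using q(2) C by (smt (verit) mult_left_mono)
    qed
    also have "\<dots> < e"
    proof -
      have "t * (2 * C^2) < e" using dy C unfolding d_def t_def dist_norm by (simp add: field_simps)
      then show ?thesis by (simp add: power2_eq_square algebra_simps)
    qed
    finally show "dist (qinv_of y) (qinv_of y0) < e"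
      unfolding \<open>qinv_of y = q\<close> q0(2) dist_norm .
  qed
qed

lemma cscale_continuous: "continuous_on UNIV (\<lambda>z. cscale z (k::'a::cstar_algebra))"
  unfolding continuous_on_iff
proof (intro ballI allI impI)
  fix z0 :: complex and e :: real assume e: "0 < e"
  show "\<exists>d>0. \<forall>z\<in>UNIV. dist z z0 < d \<longrightarrow> dist (cscale z k) (cscale z0 k) < e"
  proof (intro exI[of _ "e / (1 + norm k)"] conjI ballI impI)
    show "0 < e / (1 + norm k)" using e by (simp add: add_pos_nonneg)
    fix z assume "dist z z0 < e / (1 + norm k)"
    then have "cmod (z - z0) * (1 + norm k) < e" by (simp add: dist_norm pos_less_divide_eq add_pos_nonneg)
    moreover have "cmod (z - z0) * norm k \<le> cmod (z - z0) * (1 + norm k)" by (simp add: mult_left_mono)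
    ultimately show "dist (cscale z k) (cscale z0 k) < e"
      by (simp add: dist_norm cscale_diff_left[symmetric] norm_cscale)
  qed
qed

section \<open>Spectral radius of self-adjoint elements\<close>

text \<open>Suppose \<open>z k\<close> is quasi-invertible for every \<open>|z| \<le> 1\<close>, i.e.\ the spectral radius of \<open>k\<close> is
  below one. For \<open>0 \<le> \<rho> \<le> 1\<close>, the quasi-inverse of \<open>(\<rho> k)\<^sup>n\<^sup>+\<^sup>1\<close> is an average of the
  quasi-inverses of the rotated elements \<open>\<rho> \<omega>\<^sup>j k\<close>, so by uniform continuity of quasi-inversion
  on the compact disc it depends on \<open>\<rho>\<close> uniformly in \<open>n\<close>. Hence "\<open>(\<rho> k)\<^sup>n\<^sup>+\<^sup>1 \<rightarrow> 0\<close>" propagates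
  in steps of fixed size from \<open>\<rho> = 0\<close> up to \<open>\<rho> = 1\<close>, and the powers of \<open>k\<close> eventually become
  small. Without a unit, this replaces the spectral radius formula.\<close>

context
  fixes k :: "'a::cstar_algebra"
  assumes disc: "\<And>z. cmod z \<le> 1 \<Longrightarrow> \<exists>q. quasi_inverse (cscale z k) q"
begin

definition radial_power :: "real \<Rightarrow> nat \<Rightarrow> 'a" where
  "radial_power \<rho> n = (\<rho> ^ Suc n) *\<^sub>R succ_pow k n"

definition radial_qinv :: "real \<Rightarrow> nat \<Rightarrow> 'a" where
  "radial_qinv \<rho> n = (1 / real (Suc n)) *\<^sub>R
     (\<Sum>j<Suc n. qinv_of (cscale (complex_of_real \<rho> * root_unity n ^ j) k))"

lemma disc_qinv: "cmod z \<le> 1 \<Longrightarrow> quasi_inverse (cscale z k) (qinv_of (cscale z k))"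
  using disc quasi_inverse_qinv_of by blast

lemma radial_qinv_quasi_inverse:
  assumes "0 \<le> \<rho>" "\<rho> \<le> 1"
  shows "quasi_inverse (radial_power \<rho> n) (radial_qinv \<rho> n)"
proof -
  have "quasi_inverse (cscale (complex_of_real \<rho> ^ Suc n) (succ_pow k n)) (radial_qinv \<rho> n)"
    unfolding radial_qinv_def using assms
    by (intro quasi_inverse_root_average disc_qinv) (simp add: norm_mult)
  then show ?thesis unfolding radial_power_def scaleR_cscale by (simp only: of_real_power)
qed

lemma radial_qinv_small:
  assumes r: "0 \<le> \<rho>" "\<rho> \<le> 1" and lim: "radial_power \<rho> \<longlonglongrightarrow> 0"
  shows "eventually (\<lambda>n. norm (radial_qinv \<rho> n) \<le> 1/6) sequentially"
proof -
  have "eventually (\<lambda>n. norm (radial_power \<rho> n) < 1/7) sequentially"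
    using lim unfolding tendsto_iff dist_norm by (auto elim!: allE[of _ "1/7"])
  then show ?thesis
  proof eventually_elim
    case (elim n)
    have "norm (radial_qinv \<rho> n) \<le> norm (radial_power \<rho> n) / (1 - norm (radial_power \<rho> n))"
      using quasi_inverse_bound[OF radial_qinv_quasi_inverse[OF r]] elim by simp
    also have "\<dots> \<le> (1/7) / (1 - 1/7)"
      using elim by (intro frac_le) auto
    finally show ?case by simp
  qed
qed

lemma radial_qinv_equicontinuous:
  "\<exists>\<delta>>0. \<forall>\<rho> \<rho>0 n. 0 \<le> \<rho> \<and> \<rho> \<le> 1 \<and> 0 \<le> \<rho>0 \<and> \<rho>0 \<le> 1 \<and> \<bar>\<rho> - \<rho>0\<bar> < \<delta>
      \<longrightarrow> norm (radial_qinv \<rho> n - radial_qinv \<rho>0 n) \<le> 1/6"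
proof -
  have "continuous_on (cball 0 1) (qinv_of \<circ> (\<lambda>z. cscale z k))"
    by (rule continuous_on_compose[OF continuous_on_subset[OF cscale_continuous]
          continuous_on_subset[OF qinv_of_continuous]]) (use disc in auto)
  then have "uniformly_continuous_on (cball 0 1) (\<lambda>z. qinv_of (cscale z k))"
    by (intro compact_uniformly_continuous) (simp_all add: o_def)
  then obtain \<delta> where \<delta>: "\<delta> > 0" and
    uc: "\<And>z w. z \<in> cball 0 1 \<Longrightarrow> w \<in> cball 0 1 \<Longrightarrow> dist w z < \<delta>
           \<Longrightarrow> dist (qinv_of (cscale w k)) (qinv_of (cscale z k)) < 1/6"
    unfolding uniformly_continuous_on_def by (meson zero_less_divide_1_iff zero_less_numeral)
  have "norm (radial_qinv \<rho> n - radial_qinv \<rho>0 n) \<le> 1/6"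
    if r: "0 \<le> \<rho>" "\<rho> \<le> 1" "0 \<le> \<rho>0" "\<rho>0 \<le> 1" "\<bar>\<rho> - \<rho>0\<bar> < \<delta>" for \<rho> \<rho>0 n
  proof -
    define a where "a j = complex_of_real \<rho> * root_unity n ^ j" for j
    define b where "b j = complex_of_real \<rho>0 * root_unity n ^ j" for j
    have ab: "norm (qinv_of (cscale (a j) k) - qinv_of (cscale (b j) k)) \<le> 1/6" for j
    proof -
      have "a j - b j = complex_of_real (\<rho> - \<rho>0) * root_unity n ^ j"
        unfolding a_def b_def by (simp add: algebra_simps)
      then have "dist (a j) (b j) < \<delta>"
        using r by (simp add: dist_norm norm_mult of_real_diff[symmetric] del: of_real_diff)
      moreover have "a j \<in> cball 0 1" "b j \<in> cball 0 1" using r unfolding a_def b_def by (auto simp: norm_mult)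
      ultimately show ?thesis using uc[of "b j" "a j"] by (simp add: dist_norm)
    qed
    have "radial_qinv \<rho> n - radial_qinv \<rho>0 n
        = (1 / real (Suc n)) *\<^sub>R (\<Sum>j<Suc n. qinv_of (cscale (a j) k) - qinv_of (cscale (b j) k))"
      unfolding radial_qinv_def a_def b_def by (simp add: sum_subtractf scaleR_diff_right)
    also have "norm \<dots> \<le> (1 / real (Suc n)) * (\<Sum>j<Suc n. norm (qinv_of (cscale (a j) k) - qinv_of (cscale (b j) k)))"
      unfolding norm_scaleR abs_of_nonneg[of "1 / real (Suc n)", OF divide_nonneg_nonneg[OF zero_le_one of_nat_0_le_iff]]
      by (intro mult_left_mono norm_sum) simp
    also have "\<dots> \<le> (1 / real (Suc n)) * (\<Sum>j<Suc n. 1/6)"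
      by (intro mult_left_mono sum_mono ab) simp
    also have "\<dots> = 1/6" by (simp del: of_nat_Suc)
    finally show ?thesis .
  qed
  then show ?thesis using \<delta> by blast
qed

text \<open>Propagation step, first half: decay at \<open>\<rho>0\<close> makes \<open>(\<rho> k)\<^sup>n\<^sup>+\<^sup>1\<close> eventually small for \<open>\<rho>\<close>
  near \<open>\<rho>0\<close>, since its quasi-inverse is then eventually small.\<close>

lemma radial_power_eventually_small:
  assumes \<delta>: "\<forall>\<rho> \<rho>0 n. 0 \<le> \<rho> \<and> \<rho> \<le> 1 \<and> 0 \<le> \<rho>0 \<and> \<rho>0 \<le> 1 \<and> \<bar>\<rho> - \<rho>0\<bar> < \<delta>
      \<longrightarrow> norm (radial_qinv \<rho> n - radial_qinv \<rho>0 n) \<le> 1/6"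
    and r: "0 \<le> \<rho>" "\<rho> \<le> 1" "0 \<le> \<rho>0" "\<rho>0 \<le> 1" "\<bar>\<rho> - \<rho>0\<bar> < \<delta>"
    and lim: "radial_power \<rho>0 \<longlonglongrightarrow> 0"
  shows "eventually (\<lambda>n. norm (radial_power \<rho> n) \<le> 1/2) sequentially"
  using radial_qinv_small[OF r(3,4) lim]
proof eventually_elim
  case (elim n)
  have "norm (radial_qinv \<rho> n) \<le> norm (radial_qinv \<rho> n - radial_qinv \<rho>0 n) + norm (radial_qinv \<rho>0 n)"
    by (metis norm_triangle_sub add.commute)
  also have "\<dots> \<le> 1/3"
  proof -
    have "norm (radial_qinv \<rho> n - radial_qinv \<rho>0 n) \<le> 1/6" using \<delta> r by blast
    then show ?thesis using elim by linarith
  qed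
  finally show ?case by (rule quasi_inverse_small[OF radial_qinv_quasi_inverse[OF r(1,2)]])
qed

text \<open>Propagation step, second half: a uniform bound at \<open>\<rho>\<close> gives geometric decay below \<open>\<rho>\<close>.\<close>

lemma radial_power_tendsto_zero_below:
  assumes ev: "eventually (\<lambda>n. norm (radial_power \<rho> n) \<le> 1/2) sequentially"
    and r: "0 \<le> \<rho>'" "\<rho>' < \<rho>"
  shows "radial_power \<rho>' \<longlonglongrightarrow> 0"
proof -
  have rp: "\<rho> > 0" using r by simp
  have "eventually (\<lambda>n. norm (radial_power \<rho>' n) \<le> (\<rho>' / \<rho>) ^ Suc n / 2) sequentially"
    using ev
  proof eventually_elim
    case (elim n)
    have "radial_power \<rho>' n = ((\<rho>' / \<rho>) ^ Suc n) *\<^sub>R radial_power \<rho> n"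
      unfolding radial_power_def using rp by (simp add: power_divide)
    then have "norm (radial_power \<rho>' n) = (\<rho>' / \<rho>) ^ Suc n * norm (radial_power \<rho> n)" using r rp by simp
    also have "\<dots> \<le> (\<rho>' / \<rho>) ^ Suc n * (1/2)" using elim r rp by (intro mult_left_mono) auto
    finally show ?case by simp
  qed
  moreover have "(\<lambda>n. (\<rho>' / \<rho>) ^ Suc n / 2) \<longlonglongrightarrow> 0"
    using r rp by (intro tendsto_divide_zero LIMSEQ_Suc LIMSEQ_power_zero) auto
  ultimately show ?thesis by (rule Lim_null_comparison)
qed

text \<open>Iterating the propagation step from \<open>\<rho> = 0\<close> in steps of \<open>\<delta>/2\<close> reaches \<open>\<rho> = 1\<close>.\<close>

lemma succ_pow_eventually_small: "eventually (\<lambda>n. norm (succ_pow k n) \<le> 1/2) sequentially"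
proof -
  obtain \<delta> where \<delta>0: "\<delta> > 0" and \<delta>: "\<forall>\<rho> \<rho>0 n. 0 \<le> \<rho> \<and> \<rho> \<le> 1 \<and> 0 \<le> \<rho>0 \<and> \<rho>0 \<le> 1 \<and> \<bar>\<rho> - \<rho>0\<bar> < \<delta>
      \<longrightarrow> norm (radial_qinv \<rho> n - radial_qinv \<rho>0 n) \<le> 1/6"
    using radial_qinv_equicontinuous by blast
  note small = radial_power_eventually_small[OF \<delta>]
  text \<open>Decay holds on \<open>[0, 1) \<inter> [0, m \<delta>/2)\<close> for every \<open>m\<close>.\<close>
  have decay: "radial_power \<rho> \<longlonglongrightarrow> 0" if "0 \<le> \<rho>" "\<rho> < 1" "\<rho> < real m * (\<delta>/2)" for m \<rho>
    using that
  proof (induct m arbitrary: \<rho>)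
    case (Suc m)
    define \<rho>0 where "\<rho>0 = max 0 (\<rho> - \<delta>/2)"
    define \<rho>1 where "\<rho>1 = min 1 (\<rho> + \<delta>/4)"
    have lim0: "radial_power \<rho>0 \<longlonglongrightarrow> 0"
    proof (cases "\<rho> - \<delta>/2 \<le> 0")
      case True
      then show ?thesis unfolding \<rho>0_def radial_power_def by simp
    next
      case False
      then have "\<rho>0 = \<rho> - \<delta>/2" "0 \<le> \<rho>0" "\<rho>0 < 1" "\<rho>0 < real m * (\<delta>/2)"
        using Suc.prems \<delta>0 unfolding \<rho>0_def by (auto simp: algebra_simps)
      then show ?thesis using Suc.hyps by blast
    qed
    have r: "0 \<le> \<rho>1" "\<rho>1 \<le> 1" "0 \<le> \<rho>0" "\<rho>0 \<le> 1" "\<bar>\<rho>1 - \<rho>0\<bar> < \<delta>"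
      and "\<rho> < \<rho>1"
      using Suc.prems \<delta>0 unfolding \<rho>0_def \<rho>1_def by auto
    then show ?case
      using radial_power_tendsto_zero_below[OF small[OF r lim0]] Suc.prems(1) by blast
  qed simp
  obtain m :: nat where m: "1 < real m * (\<delta>/2)"
    using reals_Archimedean2[of "2 / \<delta>"] \<delta>0 by (auto simp: field_simps)
  define \<rho>0 where "\<rho>0 = max 0 (1 - \<delta>/2)"
  have "radial_power \<rho>0 \<longlonglongrightarrow> 0"
    using m \<delta>0 unfolding \<rho>0_def by (intro decay[of _ m]) (auto simp: max_def algebra_simps)
  moreover have "0 \<le> (1::real)" "(1::real) \<le> 1" "0 \<le> \<rho>0" "\<rho>0 \<le> 1" "\<bar>1 - \<rho>0\<bar> < \<delta>"
    using \<delta>0 unfolding \<rho>0_def by auto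
  ultimately have "eventually (\<lambda>n. norm (radial_power 1 n) \<le> 1/2) sequentially"
    using small by blast
  then show ?thesis unfolding radial_power_def by simp
qed

end

text \<open>For self-adjoint \<open>k\<close> the C*-identity gives \<open>\<parallel>k\<^sup>2\<^sup>^\<^sup>M\<parallel> = \<parallel>k\<parallel>\<^sup>2\<^sup>^\<^sup>M\<close>.\<close>

lemma norm_succ_pow_two_power:
  fixes k :: "'a::cstar_algebra"
  assumes "cstar k = k"
  shows "norm (succ_pow k (2 ^ M - 1)) = norm k ^ (2 ^ M)"
proof (induct M)
  case (Suc M)
  have "(1::nat) \<le> 2 ^ M" by simp
  then have "2 ^ Suc M - 1 = Suc ((2 ^ M - 1) + (2 ^ M - 1))" by (simp only: power_Suc)
  then have "norm (succ_pow k (2 ^ Suc M - 1)) = norm (succ_pow k (2 ^ M - 1) * succ_pow k (2 ^ M - 1))"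
    by (simp only: succ_pow_add)
  also have "\<dots> = norm (cstar (succ_pow k (2 ^ M - 1)) * succ_pow k (2 ^ M - 1))"
    using cstar_succ_pow[OF assms] by simp
  also have "\<dots> = (norm k ^ (2 ^ M))\<^sup>2" unfolding cstar_identity Suc ..
  finally show ?case by (simp add: power_mult[symmetric] mult.commute)
qed simp

lemma self_adjoint_disc_not_quasi_invertible:
  fixes k :: "'a::cstar_algebra"
  assumes sa: "cstar k = k" and nk: "norm k = 1"
  shows "\<exists>z. cmod z \<le> 1 \<and> \<not> (\<exists>q. quasi_inverse (cscale z k) q)"
proof (rule ccontr)
  assume "\<not> ?thesis"
  then obtain N where N: "\<And>n. n \<ge> N \<Longrightarrow> norm (succ_pow k n) \<le> 1/2"
    using succ_pow_eventually_small[of k] unfolding eventually_sequentially by blast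
  have "N \<le> 2 ^ N - 1" using less_exp[of N] by linarith
  then have "norm (succ_pow k (2 ^ N - 1)) \<le> 1/2" by (rule N)
  moreover have "norm (succ_pow k (2 ^ N - 1)) = 1" using norm_succ_pow_two_power[OF sa, of N] nk by simp
  ultimately show False by simp
qed

section \<open>*-homomorphisms are contractive\<close>

definition star_hom :: "('a::cstar_algebra \<Rightarrow> 'a) \<Rightarrow> bool" where
  "star_hom f \<longleftrightarrow> (\<forall>x y. f (x + y) = f x + f y) \<and> (\<forall>c x. f (cscale c x) = cscale c (f x))
     \<and> (\<forall>x y. f (x * y) = f x * f y) \<and> (\<forall>x. f (cstar x) = cstar (f x))"

context
  fixes f :: "'a::cstar_algebra \<Rightarrow> 'a"
  assumes f: "star_hom f"
begin

lemma star_hom_add: "f (x + y) = f x + f y"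
  and star_hom_cscale: "f (cscale c x) = cscale c (f x)"
  and star_hom_mult: "f (x * y) = f x * f y"
  and star_hom_cstar: "f (cstar x) = cstar (f x)"
  using f unfolding star_hom_def by blast+

lemma star_hom_diff: "f (x - y) = f x - f y"
proof -
  have zero: "f 0 = 0" using star_hom_add[of 0 0] by simp
  have "f (- y) = - f y" using star_hom_add[of y "-y"] zero by (simp add: eq_neg_iff_add_eq_0 add.commute)
  then show ?thesis using star_hom_add[of x "-y"] by simp
qed

lemma star_hom_quasi_inverse: "quasi_inverse y q \<Longrightarrow> quasi_inverse (f y) (f q)"
proof -
  have qp: "f (qprod x z) = qprod (f x) (f z)" for x z
    by (simp add: qprod_def star_hom_add star_hom_diff star_hom_mult)
  have "f 0 = 0" using star_hom_diff[of 0 0] by simp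
  then show "quasi_inverse y q \<Longrightarrow> quasi_inverse (f y) (f q)"
    unfolding quasi_inverse_def by (metis qp)
qed

text \<open>A *-homomorphism cannot enlarge norms: otherwise the normalised image \<open>k\<close> of the positive
  element \<open>x\<^sup>* x\<close> would be a self-adjoint element of norm one all of whose multiples \<open>z k\<close>,
  \<open>|z| \<le> 1\<close>, are images of elements of norm below one, hence quasi-invertible.\<close>

lemma star_hom_contract: "norm (f x) \<le> norm x"
proof -
  define h where "h = cstar x * x"
  have hs: "cstar h = h" unfolding h_def by (simp add: cstar_mult cstar_cstar)
  have fh: "norm (f h) \<le> norm h"
  proof (rule ccontr)
    assume "\<not> norm (f h) \<le> norm h"
    then have lt: "norm h < norm (f h)" by simp
    define c where "c = norm (f h)"
    have c: "c > 0" using lt unfolding c_def by (metis norm_ge_zero le_less_trans)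
    define k where "k = (1 / c) *\<^sub>R f h"
    have ks: "cstar k = k" unfolding k_def by (simp add: cstar_scaleR star_hom_cstar[symmetric] hs)
    have kn: "norm k = 1" unfolding k_def using c by (simp add: c_def)
    obtain z where z: "cmod z \<le> 1" "\<not> (\<exists>q. quasi_inverse (cscale z k) q)"
      using self_adjoint_disc_not_quasi_invertible[OF ks kn] by blast
    define w where "w = z * complex_of_real (1 / c)"
    have eq: "cscale z k = f (cscale w h)"
      unfolding k_def w_def by (simp only: star_hom_cscale scaleR_cscale cscale_mult)
    have "norm (cscale w h) = cmod z / c * norm h"
      unfolding w_def using c by (simp add: norm_cscale norm_mult norm_divide)
    also have "\<dots> \<le> norm h / c" using z(1) c by (simp add: divide_right_mono mult_left_le_one_le)
    also have "\<dots> < 1" using lt c unfolding c_def by simp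
    finally obtain q where "quasi_inverse (cscale w h) q" using neumann by blast
    then have "quasi_inverse (cscale z k) (f q)" unfolding eq by (rule star_hom_quasi_inverse)
    then show False using z(2) by blast
  qed
  have "(norm (f x))\<^sup>2 = norm (f h)" unfolding h_def by (simp add: star_hom_mult star_hom_cstar cstar_identity)
  also have "\<dots> \<le> norm h" by (rule fh)
  also have "\<dots> = (norm x)\<^sup>2" unfolding h_def by (simp add: cstar_identity)
  finally show ?thesis by (rule power2_le_imp_le) simp
qed

lemma star_hom_lipschitz: "dist (f x) (f y) \<le> dist x y"
  unfolding dist_norm star_hom_diff[symmetric] by (rule star_hom_contract)

end

text \<open>A multiplier is a pair \<open>(L, R)\<close> of left and right centralisers; by non-degeneracy each
  component is additive and a module map, and left and right parts of different multipliers
  commute.\<close>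

context
  fixes m :: "'a::cstar_algebra multiplier"
  assumes m: "is_multiplier m"
begin

lemma multiplier_balanced: "x * fst m y = snd m x * y"
  using m unfolding is_multiplier_def by blast

lemma multiplier_left_mult: "fst m (y * z) = fst m y * z"
  by (rule nondeg_left) (simp add: multiplier_balanced mult.assoc[symmetric])

lemma multiplier_left_diff: "fst m (x - y) = fst m x - fst m y"
  by (rule nondeg_left) (simp add: multiplier_balanced algebra_simps)

lemma multiplier_right_diff: "snd m (x - y) = snd m x - snd m y"
  by (rule nondeg_right) (simp add: multiplier_balanced[symmetric] algebra_simps)

end

lemma multiplier_left_right_commute:
  assumes m: "is_multiplier m" and n: "is_multiplier n"
  shows "fst m (snd n x) = snd n (fst m x)"
proof (rule nondeg_right)
  fix w
  have "fst m (snd n x) * w = fst m (snd n x * w)" by (simp add: multiplier_left_mult[OF m])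
  also have "\<dots> = fst m (x * fst n w)" by (simp add: multiplier_balanced[OF n])
  also have "\<dots> = fst m x * fst n w" by (simp add: multiplier_left_mult[OF m])
  also have "\<dots> = snd n (fst m x) * w" by (simp add: multiplier_balanced[OF n])
  finally show "fst m (snd n x) * w = snd n (fst m x) * w" .
qed

lemma mmult_assoc: "mmult (mmult a b) c = mmult a (mmult b c)"
  by (simp add: mmult_def comp_assoc)

lemma mmult_mone[simp]: "mmult mone a = a" "mmult a mone = a"
  by (simp_all add: mmult_def mone_def)

lemma mstar_mstar[simp]: "mstar (mstar (m::'a::cstar_algebra multiplier)) = m"
  by (simp add: mstar_def comp_def cstar_cstar)

lemma mstar_mmult: "mstar (mmult a b) = mmult (mstar b) (mstar (a::'a::cstar_algebra multiplier))"
  by (auto simp: mstar_def mmult_def cstar_cstar)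

lemma is_multiplier_mmult: "is_multiplier m \<Longrightarrow> is_multiplier n \<Longrightarrow> is_multiplier (mmult m n)"
  by (simp add: is_multiplier_def mmult_def)

lemma is_multiplier_mstar:
  assumes "is_multiplier (m::'a::cstar_algebra multiplier)"
  shows "is_multiplier (mstar m)"
  unfolding is_multiplier_def mstar_def
proof (intro allI, simp)
  fix x y
  have "x * cstar (snd m (cstar y)) = cstar (snd m (cstar y) * cstar x)" by (simp add: cstar_mult cstar_cstar)
  also have "\<dots> = cstar (cstar y * fst m (cstar x))" by (simp add: multiplier_balanced[OF assms])
  also have "\<dots> = cstar (fst m (cstar x)) * y" by (simp add: cstar_mult cstar_cstar)
  finally show "x * cstar (snd m (cstar y)) = cstar (fst m (cstar x)) * y" .
qed

lemma unitary_multiplier: "unitary_mult m \<Longrightarrow> is_multiplier m"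
  by (simp add: unitary_mult_def)

lemma unitary_mstar: "unitary_mult (u::'a::cstar_algebra multiplier) \<Longrightarrow> unitary_mult (mstar u)"
  by (simp add: unitary_mult_def is_multiplier_mstar)

lemma unitary_mmult:
  assumes u: "unitary_mult (u::'a::cstar_algebra multiplier)" and v: "unitary_mult v"
  shows "unitary_mult (mmult u v)"
proof -
  have "mmult (mmult u v) (mstar (mmult u v)) = mmult u (mmult (mmult v (mstar v)) (mstar u))"
    by (simp add: mstar_mmult mmult_assoc)
  also have "\<dots> = mone" using u v by (simp add: unitary_mult_def)
  finally have 1: "mmult (mmult u v) (mstar (mmult u v)) = mone" .
  have "mmult (mstar (mmult u v)) (mmult u v) = mmult (mstar v) (mmult (mmult (mstar u) u) v)"
    by (simp add: mstar_mmult mmult_assoc)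
  also have "\<dots> = mone" using u v by (simp add: unitary_mult_def)
  finally show ?thesis using 1 u v by (simp add: unitary_mult_def is_multiplier_mmult)
qed

lemma unitary_cancel:
  assumes "unitary_mult u"
  shows "mmult u (mmult (mstar u) z) = z" "mmult (mstar u) (mmult u z) = z"
  using assms by (simp_all add: unitary_mult_def mmult_assoc[symmetric])

lemma unitary_left_inverse: "unitary_mult u \<Longrightarrow> fst u (fst (mstar u) x) = x"
  and unitary_right_inverse: "unitary_mult u \<Longrightarrow> snd (mstar u) (snd u x) = x"
  by (metis (no_types, lifting) comp_apply fst_conv snd_conv id_apply mmult_def mone_def unitary_mult_def)+

lemma unitary_left_isometric:
  assumes u: "unitary_mult (u::'a::cstar_algebra multiplier)"
  shows "norm (fst u x) = norm x"
proof -
  have us: "is_multiplier (mstar u)" using u by (simp add: unitary_mult_def is_multiplier_mstar)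
  have inv: "fst (mstar u) (fst u x) = x"
    using unitary_left_inverse[OF unitary_mstar[OF u]] by simp
  have "cstar (fst u x) * fst u x = snd (mstar u) (cstar x) * fst u x"
    by (simp add: mstar_def cstar_cstar)
  also have "\<dots> = cstar x * x"
    unfolding multiplier_balanced[OF us, symmetric] inv ..
  finally have "cstar (fst u x) * fst u x = cstar x * x" .
  then have "(norm (fst u x))\<^sup>2 = (norm x)\<^sup>2" by (simp add: cstar_identity[symmetric])
  then show ?thesis by (simp add: power2_eq_iff_nonneg)
qed

lemma unitary_right_isometric:
  assumes u: "unitary_mult (u::'a::cstar_algebra multiplier)"
  shows "norm (snd u x) = norm x"
proof -
  have "snd u x = cstar (fst (mstar u) (cstar x))" by (simp add: mstar_def cstar_cstar)
  then show ?thesis using unitary_left_isometric[OF unitary_mstar[OF u]] by simp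
qed

lemma unitary_left_lipschitz: "unitary_mult u \<Longrightarrow> dist (fst u x) (fst u y) \<le> dist x y"
  by (simp add: dist_norm multiplier_left_diff[OF unitary_multiplier, symmetric] unitary_left_isometric)

lemma unitary_right_lipschitz: "unitary_mult u \<Longrightarrow> dist (snd u x) (snd u y) \<le> dist x y"
  by (simp add: dist_norm multiplier_right_diff[OF unitary_multiplier, symmetric] unitary_right_isometric)

lemma is_aut_iff: "is_aut f \<longleftrightarrow> bij f \<and> star_hom f"
  unfolding is_aut_def star_hom_def by blast

lemma is_aut_f_inv: "is_aut f \<Longrightarrow> f (inv f x) = x"
  by (simp add: is_aut_def bij_is_surj surj_f_inv_f)

lemma is_aut_inv_f: "is_aut f \<Longrightarrow> inv f (f x) = x"
  by (simp add: is_aut_def bij_is_inj inv_f_f)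

lemma is_aut_cstar: "is_aut f \<Longrightarrow> f (cstar x) = cstar (f x)"
  by (simp add: is_aut_def)

lemma is_aut_inv:
  assumes f: "is_aut f"
  shows "is_aut (inv f)"
proof -
  have eq: "inv f y = x \<longleftrightarrow> y = f x" for x y
    using f by (metis is_aut_f_inv is_aut_inv_f)
  show ?thesis
    using f unfolding is_aut_def
    by (auto simp: eq bij_imp_bij_inv is_aut_f_inv[OF f])
qed

lemma is_aut_comp: "is_aut f \<Longrightarrow> is_aut g \<Longrightarrow> is_aut (f \<circ> g)"
  unfolding is_aut_def by (auto intro: bij_comp)

lemma aut_ext_mmult: "is_aut f \<Longrightarrow> aut_ext f (mmult m n) = mmult (aut_ext f m) (aut_ext f n)"
  by (auto simp: aut_ext_def mmult_def is_aut_inv_f)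

lemma aut_ext_mone: "is_aut f \<Longrightarrow> aut_ext f mone = mone"
  by (auto simp: aut_ext_def mone_def is_aut_f_inv)

lemma aut_ext_comp: "bij f \<Longrightarrow> bij g \<Longrightarrow> aut_ext (f \<circ> g) m = aut_ext f (aut_ext g m)"
  by (simp add: aut_ext_def o_inv_distrib comp_assoc)

lemma aut_ext_mstar: "is_aut f \<Longrightarrow> aut_ext f (mstar m) = mstar (aut_ext f m)"
  by (auto simp: aut_ext_def mstar_def is_aut_cstar is_aut_cstar[OF is_aut_inv])

lemma aut_ext_multiplier:
  assumes f: "is_aut f" and m: "is_multiplier m"
  shows "is_multiplier (aut_ext f m)"
  unfolding is_multiplier_def aut_ext_def
proof (intro allI, simp)
  have sh: "star_hom f" using f by (simp add: is_aut_iff)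
  fix x y
  have "x * f (fst m (inv f y)) = f (inv f x * fst m (inv f y))"
    by (simp add: star_hom_mult[OF sh] is_aut_f_inv[OF f])
  also have "\<dots> = f (snd m (inv f x) * inv f y)" by (simp add: multiplier_balanced[OF m])
  also have "\<dots> = f (snd m (inv f x)) * y" by (simp add: star_hom_mult[OF sh] is_aut_f_inv[OF f])
  finally show "x * f (fst m (inv f y)) = f (snd m (inv f x)) * y" .
qed

lemma aut_ext_unitary: "is_aut f \<Longrightarrow> unitary_mult u \<Longrightarrow> unitary_mult (aut_ext f u)"
  unfolding unitary_mult_def
  by (simp add: aut_ext_multiplier aut_ext_mstar[symmetric] aut_ext_mmult[symmetric] aut_ext_mone)

lemma aut_ad: "is_aut f \<Longrightarrow> f \<circ> ad u = ad (aut_ext f u) \<circ> f"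
  by (auto simp: ad_def aut_ext_def mstar_def is_aut_cstar[symmetric] is_aut_inv_f)

lemma ad_mmult:
  assumes u: "is_multiplier u" and v: "is_multiplier (v::'a::cstar_algebra multiplier)"
  shows "ad (mmult u v) = ad u \<circ> ad v"
proof -
  have us: "is_multiplier (mstar u)" using u by (rule is_multiplier_mstar)
  have "ad (mmult u v) = fst u \<circ> (fst v \<circ> snd (mstar u)) \<circ> snd (mstar v)"
    by (auto simp: ad_def mmult_def mstar_def cstar_cstar)
  also have "fst v \<circ> snd (mstar u) = snd (mstar u) \<circ> fst v"
    using multiplier_left_right_commute[OF v us] by auto
  finally show ?thesis unfolding ad_def by (simp only: comp_assoc)
qed

lemma ad_unitary_inv:
  assumes u: "unitary_mult (u::'a::cstar_algebra multiplier)"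
  shows "ad u \<circ> ad (mstar u) = id" "ad (mstar u) \<circ> ad u = id"
proof -
  have ad_mone: "ad mone = (id::'a \<Rightarrow> 'a)"
    by (auto simp: ad_def mone_def mstar_def cstar_cstar)
  have m: "is_multiplier u" "is_multiplier (mstar u)"
    using u by (simp_all add: unitary_mult_def is_multiplier_mstar)
  show "ad u \<circ> ad (mstar u) = id" "ad (mstar u) \<circ> ad u = id"
    using ad_mmult[OF m] ad_mmult[OF m(2) m(1)] u by (simp_all add: unitary_mult_def ad_mone)
qed

lemma ad_bij: "unitary_mult u \<Longrightarrow> bij (ad u)"
  using ad_unitary_inv by (metis o_bij)

lemma aut_ext_ad:
  assumes u: "unitary_mult (u::'a::cstar_algebra multiplier)" and m: "is_multiplier m"
  shows "aut_ext (ad u) m = mmult (mmult u m) (mstar u)"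
proof -
  have mu: "is_multiplier u" "is_multiplier (mstar u)"
    using u by (simp_all add: unitary_mult_def is_multiplier_mstar)
  have inv: "inv (ad u) = ad (mstar u)" using ad_unitary_inv[OF u] by (metis inv_unique_comp)
  have left_part: "fst u (snd (mstar u) (fst m (fst (mstar u) (snd u x)))) = fst u (fst m (fst (mstar u) x))" for x
    by (simp only: multiplier_left_right_commute[OF m mu(2), symmetric]
        multiplier_left_right_commute[OF mu(2) mu(2), symmetric] unitary_right_inverse[OF u])
  have right_part: "fst u (snd (mstar u) (snd m (fst (mstar u) (snd u x)))) = snd (mstar u) (snd m (snd u x))" for x
    by (simp only: multiplier_left_right_commute[OF mu(2) mu(1)] multiplier_left_right_commute[OF mu(1) mu(2)]
        multiplier_left_right_commute[OF mu(1) m] multiplier_left_right_commute[OF mu(1) mu(1)]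
        unitary_left_inverse[OF u])
  show ?thesis
    unfolding aut_ext_def inv mmult_def using left_part right_part by (auto simp: ad_def)
qed

lemma twisted_action_aut_ext:
  assumes t: "twisted_action a \<alpha>" and m: "is_multiplier m"
  shows "aut_ext (a x) (aut_ext (a y) m) = mmult (mmult (\<alpha> x y) (aut_ext (a (x + y)) m)) (mstar (\<alpha> x y))"
proof -
  have aut: "is_aut (a z)" and u: "unitary_mult (\<alpha> x y)" for z
    using t by (simp_all add: twisted_action_def)
  have "aut_ext (a x) (aut_ext (a y) m) = aut_ext (a x \<circ> a y) m"
    using aut by (simp add: aut_ext_comp is_aut_def)
  also have "a x \<circ> a y = ad (\<alpha> x y) \<circ> a (x + y)" using t by (simp add: twisted_action_def)
  also have "aut_ext \<dots> m = aut_ext (ad (\<alpha> x y)) (aut_ext (a (x + y)) m)"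
    using aut u by (intro aut_ext_comp ad_bij) (simp_all add: is_aut_def)
  also have "\<dots> = mmult (mmult (\<alpha> x y) (aut_ext (a (x + y)) m)) (mstar (\<alpha> x y))"
    using aut u m by (intro aut_ext_ad aut_ext_multiplier)
  finally show ?thesis .
qed

section \<open>The cocycle identity for the product\<close>

notation mmult (infixl "\<star>" 70)

text \<open>The cocycle identity for \<open>\<beta>((x,\<xi>),(y,\<eta>)) = T\<^sub>\<xi>(\<kappa>(x,\<eta>)) \<alpha>~(\<xi>,\<eta>) T\<^sub>\<xi>\<^sub>+\<^sub>\<eta>(\<alpha>(x,y))\<close>, stated
  abstractly: \<open>T\<^sub>\<xi>\<close> and \<open>S\<^sub>x\<close> stand for the extensions of \<open>a~\<^sub>\<xi>\<close> and \<open>a\<^sub>x\<close> to multipliers, and the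
  hypotheses are exactly the multiplier-level consequences of the two twisted actions (their
  cocycle identities and the relation \<open>T\<^sub>\<xi> T\<^sub>\<eta> = Ad \<alpha>~(\<xi>,\<eta>) T\<^sub>\<xi>\<^sub>+\<^sub>\<eta>\<close>) and of the covariance
  conditions (C1)--(C3). The proof expands the right-hand side with (C2) and the commutation
  rule of \<open>S\<close> past \<open>T\<close>, merges the two \<open>\<alpha>~\<close> and the two \<open>\<alpha>\<close> factors by the cocycle identities,
  and then uses (C3) to move \<open>\<alpha>(x,y)\<close> into place.\<close>

lemma product_cocycle_identity:
  fixes T :: "'h::group_add \<Rightarrow> 'a::cstar_algebra multiplier \<Rightarrow> 'a multiplier"
    and S :: "'g::group_add \<Rightarrow> 'a multiplier \<Rightarrow> 'a multiplier"
    and \<alpha> :: "'g \<Rightarrow> 'g \<Rightarrow> 'a multiplier" and \<alpha>t :: "'h \<Rightarrow> 'h \<Rightarrow> 'a multiplier"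
    and \<kappa> :: "'g \<Rightarrow> 'h \<Rightarrow> 'a multiplier"
  assumes T_mult: "\<And>\<xi> m n. T \<xi> (m \<star> n) = T \<xi> m \<star> T \<xi> n"
    and T_mstar: "\<And>\<xi> m. T \<xi> (mstar m) = mstar (T \<xi> m)"
    and S_mult: "\<And>x m n. S x (m \<star> n) = S x m \<star> S x n"
    and S_mstar: "\<And>x m. S x (mstar m) = mstar (S x m)"
    and unitary_\<alpha>: "\<And>x y. unitary_mult (\<alpha> x y)" and unitary_\<alpha>t: "\<And>\<xi> \<eta>. unitary_mult (\<alpha>t \<xi> \<eta>)"
    and unitary_\<kappa>: "\<And>x \<xi>. unitary_mult (\<kappa> x \<xi>)"
    and unitary_T: "\<And>\<xi> u. unitary_mult u \<Longrightarrow> unitary_mult (T \<xi> u)"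
    and unitary_S: "\<And>x u. unitary_mult u \<Longrightarrow> unitary_mult (S x u)"
    and T_T: "\<And>\<xi> \<eta> u. unitary_mult u \<Longrightarrow> T \<xi> (T \<eta> u) = \<alpha>t \<xi> \<eta> \<star> T (\<xi> + \<eta>) u \<star> mstar (\<alpha>t \<xi> \<eta>)"
    and S_T: "\<And>x \<eta> u. unitary_mult u \<Longrightarrow> S x (T \<eta> u) = \<kappa> x \<eta> \<star> T \<eta> (S x u) \<star> mstar (\<kappa> x \<eta>)"
    and C2: "\<And>x \<xi> \<eta>. S x (\<alpha>t \<xi> \<eta>) = \<kappa> x \<xi> \<star> T \<xi> (\<kappa> x \<eta>) \<star> \<alpha>t \<xi> \<eta> \<star> mstar (\<kappa> x (\<xi> + \<eta>))"
    and C3: "\<And>x y \<xi>. T \<xi> (\<alpha> x y) = mstar (\<kappa> x \<xi>) \<star> S x (mstar (\<kappa> y \<xi>)) \<star> \<alpha> x y \<star> \<kappa> (x + y) \<xi>"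
    and cocycle_\<alpha>: "\<And>x y z. \<alpha> x y \<star> \<alpha> (x + y) z = S x (\<alpha> y z) \<star> \<alpha> x (y + z)"
    and cocycle_\<alpha>t: "\<And>\<xi> \<eta> \<zeta>. \<alpha>t \<xi> \<eta> \<star> \<alpha>t (\<xi> + \<eta>) \<zeta> = T \<xi> (\<alpha>t \<eta> \<zeta>) \<star> \<alpha>t \<xi> (\<eta> + \<zeta>)"
  shows "(T \<xi> (\<kappa> x \<eta>) \<star> \<alpha>t \<xi> \<eta> \<star> T (\<xi> + \<eta>) (\<alpha> x y)) \<star> (T (\<xi> + \<eta>) (\<kappa> (x + y) \<zeta>) \<star> \<alpha>t (\<xi> + \<eta>) \<zeta> \<star> T (\<xi> + \<eta> + \<zeta>) (\<alpha> (x + y) z))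
       = T \<xi> (S x (T \<eta> (\<kappa> y \<zeta>) \<star> \<alpha>t \<eta> \<zeta> \<star> T (\<eta> + \<zeta>) (\<alpha> y z))) \<star> (T \<xi> (\<kappa> x (\<eta> + \<zeta>)) \<star> \<alpha>t \<xi> (\<eta> + \<zeta>) \<star> T (\<xi> + (\<eta> + \<zeta>)) (\<alpha> x (y + z)))"
proof -
  note unitaries = unitary_\<alpha> unitary_\<alpha>t unitary_\<kappa> unitary_T unitary_S unitary_mstar unitary_mmult
  have S_expanded: "S x (T \<eta> (\<kappa> y \<zeta>) \<star> \<alpha>t \<eta> \<zeta> \<star> T (\<eta> + \<zeta>) (\<alpha> y z))
     = \<kappa> x \<eta> \<star> (T \<eta> (S x (\<kappa> y \<zeta>)) \<star> (T \<eta> (\<kappa> x \<zeta>) \<star> (\<alpha>t \<eta> \<zeta> \<star> (T (\<eta> + \<zeta>) (S x (\<alpha> y z)) \<star> mstar (\<kappa> x (\<eta> + \<zeta>))))))"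
    by (simp add: S_mult S_T C2 mmult_assoc unitary_cancel unitaries)
  define \<theta> where "\<theta> = \<xi> + \<eta>"
  have rhs_expanded: "T \<xi> (S x (T \<eta> (\<kappa> y \<zeta>) \<star> \<alpha>t \<eta> \<zeta> \<star> T (\<eta> + \<zeta>) (\<alpha> y z))) \<star> (T \<xi> (\<kappa> x (\<eta> + \<zeta>)) \<star> \<alpha>t \<xi> (\<eta> + \<zeta>) \<star> T (\<xi> + (\<eta> + \<zeta>)) (\<alpha> x (y + z)))
    = T \<xi> (\<kappa> x \<eta>) \<star> (\<alpha>t \<xi> \<eta> \<star> (T \<theta> (S x (\<kappa> y \<zeta>)) \<star> (T \<theta> (\<kappa> x \<zeta>) \<star> (mstar (\<alpha>t \<xi> \<eta>) \<star> (T \<xi> (\<alpha>t \<eta> \<zeta>) \<star> (\<alpha>t \<xi> (\<eta> + \<zeta>) \<star> (T (\<xi> + (\<eta> + \<zeta>)) (S x (\<alpha> y z)) \<star> T (\<xi> + (\<eta> + \<zeta>)) (\<alpha> x (y + z)))))))))"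
    unfolding S_expanded \<theta>_def by (simp add: T_mult T_mstar T_T mmult_assoc unitary_cancel unitaries)
  also have "\<dots> = T \<xi> (\<kappa> x \<eta>) \<star> (\<alpha>t \<xi> \<eta> \<star> (T \<theta> (S x (\<kappa> y \<zeta>)) \<star> (T \<theta> (\<kappa> x \<zeta>) \<star> (\<alpha>t \<theta> \<zeta> \<star> (T (\<theta> + \<zeta>) (\<alpha> x y) \<star> T (\<theta> + \<zeta>) (\<alpha> (x + y) z))))))"
  proof -
    have a: "T \<xi> (\<alpha>t \<eta> \<zeta>) \<star> (\<alpha>t \<xi> (\<eta> + \<zeta>) \<star> W) = \<alpha>t \<xi> \<eta> \<star> (\<alpha>t \<theta> \<zeta> \<star> W)" for W
      using cocycle_\<alpha>t[of \<xi> \<eta> \<zeta>] unfolding \<theta>_def by (simp add: mmult_assoc[symmetric])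
    have b: "T (\<xi> + (\<eta> + \<zeta>)) (S x (\<alpha> y z)) \<star> T (\<xi> + (\<eta> + \<zeta>)) (\<alpha> x (y + z)) = T (\<theta> + \<zeta>) (\<alpha> x y) \<star> T (\<theta> + \<zeta>) (\<alpha> (x + y) z)"
      unfolding T_mult[symmetric] cocycle_\<alpha>[symmetric] \<theta>_def by (simp add: add.assoc)
    show ?thesis unfolding a b by (simp add: unitary_cancel unitaries)
  qed
  also have "\<dots> = T \<xi> (\<kappa> x \<eta>) \<star> (\<alpha>t \<xi> \<eta> \<star> (T \<theta> (S x (\<kappa> y \<zeta>)) \<star> (T \<theta> (\<kappa> x \<zeta>) \<star> (T \<theta> (T \<zeta> (\<alpha> x y)) \<star> (\<alpha>t \<theta> \<zeta> \<star> T (\<theta> + \<zeta>) (\<alpha> (x + y) z))))))"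
  proof -
    have "T \<theta> (T \<zeta> (\<alpha> x y)) \<star> (\<alpha>t \<theta> \<zeta> \<star> W) = \<alpha>t \<theta> \<zeta> \<star> (T (\<theta> + \<zeta>) (\<alpha> x y) \<star> W)" for W
      by (simp add: T_T unitaries mmult_assoc unitary_cancel)
    then show ?thesis by simp
  qed
  also have "\<dots> = T \<xi> (\<kappa> x \<eta>) \<star> (\<alpha>t \<xi> \<eta> \<star> (T \<theta> (\<alpha> x y) \<star> (T \<theta> (\<kappa> (x + y) \<zeta>) \<star> (\<alpha>t \<theta> \<zeta> \<star> T (\<theta> + \<zeta>) (\<alpha> (x + y) z)))))"
    unfolding C3[where x=x and y=y and \<xi>=\<zeta>] by (simp add: T_mult T_mstar S_mstar mmult_assoc unitary_cancel unitaries)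
  also have "\<dots> = (T \<xi> (\<kappa> x \<eta>) \<star> \<alpha>t \<xi> \<eta> \<star> T (\<xi> + \<eta>) (\<alpha> x y)) \<star> (T (\<xi> + \<eta>) (\<kappa> (x + y) \<zeta>) \<star> \<alpha>t (\<xi> + \<eta>) \<zeta> \<star> T (\<xi> + \<eta> + \<zeta>) (\<alpha> (x + y) z))"
    unfolding \<theta>_def by (simp add: mmult_assoc)
  finally show ?thesis by simp
qed

context
  fixes a :: "'g::lcsc_group \<Rightarrow> 'a::cstar_algebra \<Rightarrow> 'a"
    and \<alpha> :: "'g \<Rightarrow> 'g \<Rightarrow> 'a multiplier"
    and ta :: "'h::lcsc_group \<Rightarrow> 'a \<Rightarrow> 'a"
    and \<alpha>t :: "'h \<Rightarrow> 'h \<Rightarrow> 'a multiplier"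
    and \<kappa> :: "'g \<Rightarrow> 'h \<Rightarrow> 'a multiplier"
  assumes cs: "covariant_structure a \<alpha> ta \<alpha>t \<kappa>"
begin

lemma twisted_a: "twisted_action a \<alpha>" and twisted_ta: "twisted_action ta \<alpha>t"
  using cs by (simp_all add: covariant_structure_def measurable_twisted_action_def)

lemma aut_a: "is_aut (a x)" and aut_ta: "is_aut (ta \<xi>)"
  and unitary_\<alpha>: "unitary_mult (\<alpha> x y)" and unitary_\<alpha>t: "unitary_mult (\<alpha>t \<xi> \<eta>)"
  using twisted_a twisted_ta by (simp_all add: twisted_action_def)

lemma unitary_\<kappa>: "unitary_mult (\<kappa> x \<xi>)"
  and \<kappa>_zero: "\<kappa> 0 \<xi> = mone" "\<kappa> x 0 = mone"
  and C1: "a x \<circ> ta \<xi> = ad (\<kappa> x \<xi>) \<circ> ta \<xi> \<circ> a x"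
  and C2: "aut_ext (a x) (\<alpha>t \<xi> \<eta>) = \<kappa> x \<xi> \<star> aut_ext (ta \<xi>) (\<kappa> x \<eta>) \<star> \<alpha>t \<xi> \<eta> \<star> mstar (\<kappa> x (\<xi> + \<eta>))"
  and C3: "aut_ext (ta \<xi>) (\<alpha> x y) = mstar (\<kappa> x \<xi>) \<star> aut_ext (a x) (mstar (\<kappa> y \<xi>)) \<star> \<alpha> x y \<star> \<kappa> (x + y) \<xi>"
  using cs unfolding covariant_structure_def by blast+

lemma aut_ext_commute:
  assumes u: "unitary_mult u"
  shows "aut_ext (a x) (aut_ext (ta \<eta>) u) = \<kappa> x \<eta> \<star> aut_ext (ta \<eta>) (aut_ext (a x) u) \<star> mstar (\<kappa> x \<eta>)"
proof -
  have bij: "bij (a x)" "bij (ta \<eta>)" using aut_a aut_ta by (simp_all add: is_aut_def)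
  have "aut_ext (a x) (aut_ext (ta \<eta>) u) = aut_ext (a x \<circ> ta \<eta>) u"
    by (simp add: aut_ext_comp bij)
  also have "\<dots> = aut_ext (ad (\<kappa> x \<eta>) \<circ> (ta \<eta> \<circ> a x)) u"
    by (simp add: C1 comp_assoc)
  also have "\<dots> = aut_ext (ad (\<kappa> x \<eta>)) (aut_ext (ta \<eta> \<circ> a x) u)"
    by (intro aut_ext_comp ad_bij unitary_\<kappa> bij_comp bij)
  also have "\<dots> = \<kappa> x \<eta> \<star> aut_ext (ta \<eta> \<circ> a x) u \<star> mstar (\<kappa> x \<eta>)"
    by (intro aut_ext_ad unitary_\<kappa> aut_ext_multiplier is_aut_comp aut_a aut_ta unitary_multiplier u)
  finally show ?thesis by (simp add: aut_ext_comp bij)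
qed

lemma prod_act_aut: "is_aut (prod_act a ta p)"
  unfolding prod_act_def by (intro is_aut_comp aut_a aut_ta)

lemma prod_cocycle_unitary: "unitary_mult (prod_cocycle \<alpha> ta \<alpha>t \<kappa> p q)"
  unfolding prod_cocycle_def
  by (intro unitary_mmult aut_ext_unitary aut_ta unitary_\<kappa> unitary_\<alpha> unitary_\<alpha>t)

text \<open>\<open>A\<^sub>p A\<^sub>q = Ad \<beta>(p,q) \<circ> A\<^sub>p\<^sub>+\<^sub>q\<close>: move \<open>a\<^sub>x\<close> past \<open>a~\<^sub>\<eta>\<close> by (C1), combine the two actions by their
  own twisted relations, and collect the inner automorphisms using \<open>f \<circ> ad\<^sub>u = ad\<^sub>f\<^sub>(\<^sub>u\<^sub>) \<circ> f\<close>.\<close>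

lemma prod_act_comp:
  "prod_act a ta p \<circ> prod_act a ta q = ad (prod_cocycle \<alpha> ta \<alpha>t \<kappa> p q) \<circ> prod_act a ta (p + q)"
proof -
  obtain x \<xi> y \<eta> where p: "p = (x, \<xi>)" and q: "q = (y, \<eta>)" by (cases p, cases q)
  have mk: "is_multiplier (\<kappa> x \<eta>)" "is_multiplier (\<alpha>t \<xi> \<eta>)" "is_multiplier (\<alpha> x y)"
    using unitary_\<kappa> unitary_\<alpha> unitary_\<alpha>t unitary_multiplier by blast+
  have "prod_act a ta p \<circ> prod_act a ta q = ta \<xi> \<circ> (a x \<circ> ta \<eta>) \<circ> a y"
    unfolding prod_act_def p q by (simp add: comp_assoc)
  also have "\<dots> = (ta \<xi> \<circ> ad (\<kappa> x \<eta>)) \<circ> ta \<eta> \<circ> (a x \<circ> a y)" unfolding C1 by (simp add: comp_assoc)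
  also have "\<dots> = ad (aut_ext (ta \<xi>) (\<kappa> x \<eta>)) \<circ> (ta \<xi> \<circ> ta \<eta>) \<circ> (ad (\<alpha> x y) \<circ> a (x + y))"
    using twisted_a by (simp add: aut_ad[OF aut_ta] twisted_action_def comp_assoc)
  also have "\<dots> = ad (aut_ext (ta \<xi>) (\<kappa> x \<eta>)) \<circ> ad (\<alpha>t \<xi> \<eta>) \<circ> (ta (\<xi> + \<eta>) \<circ> ad (\<alpha> x y)) \<circ> a (x + y)"
    using twisted_ta by (simp add: twisted_action_def comp_assoc)
  also have "\<dots> = ad (aut_ext (ta \<xi>) (\<kappa> x \<eta>)) \<circ> ad (\<alpha>t \<xi> \<eta>) \<circ> ad (aut_ext (ta (\<xi> + \<eta>)) (\<alpha> x y)) \<circ> (ta (\<xi> + \<eta>) \<circ> a (x + y))"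
    by (simp add: aut_ad[OF aut_ta] comp_assoc)
  also have "\<dots> = ad (prod_cocycle \<alpha> ta \<alpha>t \<kappa> p q) \<circ> prod_act a ta (p + q)"
    unfolding prod_cocycle_def prod_act_def p q
    by (simp add: ad_mmult is_multiplier_mmult aut_ext_multiplier aut_ta mk comp_assoc)
  finally show ?thesis .
qed

lemma prod_cocycle_zero: "prod_cocycle \<alpha> ta \<alpha>t \<kappa> p 0 = mone" "prod_cocycle \<alpha> ta \<alpha>t \<kappa> 0 p = mone"
proof -
  have "aut_ext id m = m" for m :: "'a multiplier" by (simp add: aut_ext_def)
  then show "prod_cocycle \<alpha> ta \<alpha>t \<kappa> p 0 = mone" "prod_cocycle \<alpha> ta \<alpha>t \<kappa> 0 p = mone"
    using twisted_a twisted_ta \<kappa>_zero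
    by (simp_all add: prod_cocycle_def twisted_action_def aut_ext_mone aut_ta)
qed

lemma prod_cocycle_cocycle:
  "prod_cocycle \<alpha> ta \<alpha>t \<kappa> p q \<star> prod_cocycle \<alpha> ta \<alpha>t \<kappa> (p + q) r
     = aut_ext (prod_act a ta p) (prod_cocycle \<alpha> ta \<alpha>t \<kappa> q r) \<star> prod_cocycle \<alpha> ta \<alpha>t \<kappa> p (q + r)"
proof -
  obtain x \<xi> y \<eta> z \<zeta> where p: "p = (x, \<xi>)" and q: "q = (y, \<eta>)" and r: "r = (z, \<zeta>)"
    by (cases p, cases q, cases r)
  have "aut_ext (prod_act a ta p) (prod_cocycle \<alpha> ta \<alpha>t \<kappa> q r)
      = aut_ext (ta \<xi>) (aut_ext (a x) (prod_cocycle \<alpha> ta \<alpha>t \<kappa> q r))"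
    using aut_a aut_ta unfolding prod_act_def p by (simp add: aut_ext_comp is_aut_def)
  moreover have "(aut_ext (ta \<xi>) (\<kappa> x \<eta>) \<star> \<alpha>t \<xi> \<eta> \<star> aut_ext (ta (\<xi> + \<eta>)) (\<alpha> x y))
        \<star> (aut_ext (ta (\<xi> + \<eta>)) (\<kappa> (x + y) \<zeta>) \<star> \<alpha>t (\<xi> + \<eta>) \<zeta> \<star> aut_ext (ta (\<xi> + \<eta> + \<zeta>)) (\<alpha> (x + y) z))
      = aut_ext (ta \<xi>) (aut_ext (a x) (aut_ext (ta \<eta>) (\<kappa> y \<zeta>) \<star> \<alpha>t \<eta> \<zeta> \<star> aut_ext (ta (\<eta> + \<zeta>)) (\<alpha> y z)))
        \<star> (aut_ext (ta \<xi>) (\<kappa> x (\<eta> + \<zeta>)) \<star> \<alpha>t \<xi> (\<eta> + \<zeta>) \<star> aut_ext (ta (\<xi> + (\<eta> + \<zeta>))) (\<alpha> x (y + z)))"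
    using twisted_a twisted_ta
    by (intro product_cocycle_identity[where T="\<lambda>\<xi>. aut_ext (ta \<xi>)" and S="\<lambda>x. aut_ext (a x)"]
          aut_ext_mmult aut_ext_mstar aut_ext_unitary aut_a aut_ta unitary_\<alpha> unitary_\<alpha>t unitary_\<kappa>
          aut_ext_commute C2 C3)
       (simp_all add: twisted_action_aut_ext unitary_multiplier twisted_action_def)
  ultimately show ?thesis unfolding prod_cocycle_def p q r by simp
qed

theorem prod_twisted_action: "twisted_action (prod_act a ta) (prod_cocycle \<alpha> ta \<alpha>t \<kappa>)"
  unfolding twisted_action_def
  using prod_act_aut prod_cocycle_unitary prod_act_comp prod_cocycle_zero prod_cocycle_cocycle
    twisted_a twisted_ta
  by (auto simp: prod_act_def twisted_action_def)

end

section \<open>Regularity of families of nonexpansive maps\<close>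

text \<open>A family \<open>\<Phi>\<^sub>p\<close> of nonexpansive self-maps of \<open>A\<close> is \<^emph>\<open>regular for\<close> a class \<open>C\<close> of maps
  \<open>X \<rightarrow> A\<close> if all orbit maps \<open>p \<mapsto> \<Phi>\<^sub>p(B)\<close> lie in \<open>C\<close>. The classes of interest are the Borel
  measurable and the continuous maps; both are \<^emph>\<open>stable\<close>: \<open>p \<mapsto> \<Phi>\<^sub>p(g(p))\<close> lies in \<open>C\<close> whenever
  \<open>g\<close> does.\<close>

definition regular_family :: "('x \<Rightarrow> 'a) set \<Rightarrow> ('x \<Rightarrow> 'a::metric_space \<Rightarrow> 'a) \<Rightarrow> bool" where
  "regular_family C \<Phi> \<longleftrightarrow> (\<forall>B. (\<lambda>p. \<Phi> p B) \<in> C) \<and> (\<forall>p x y. dist (\<Phi> p x) (\<Phi> p y) \<le> dist x y)"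

definition stable_class :: "('x \<Rightarrow> 'a::metric_space) set \<Rightarrow> bool" where
  "stable_class C \<longleftrightarrow> (\<forall>\<Phi> g. regular_family C \<Phi> \<and> g \<in> C \<longrightarrow> (\<lambda>p. \<Phi> p (g p)) \<in> C)"

definition continuous_functions :: "('x::topological_space \<Rightarrow> 'y::topological_space) set" where
  "continuous_functions = {g. continuous_on UNIV g}"

lemma mem_continuous_functions[simp]: "g \<in> continuous_functions \<longleftrightarrow> continuous_on UNIV g"
  by (simp add: continuous_functions_def)

lemma stable_classD: "stable_class C \<Longrightarrow> regular_family C \<Phi> \<Longrightarrow> g \<in> C \<Longrightarrow> (\<lambda>p. \<Phi> p (g p)) \<in> C"
  by (simp add: stable_class_def)

text \<open>Borel measurability is stable (a Carath\'eodory-type argument): approximate \<open>g\<close> by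
  countably-valued measurable maps into a countable dense set and use nonexpansiveness.\<close>

lemma stable_borel_measurable:
  "stable_class (borel_measurable M :: ('x \<Rightarrow> 'a::{metric_space, second_countable_topology}) set)"
  unfolding stable_class_def
proof (intro allI impI, elim conjE)
  fix \<Phi> :: "'x \<Rightarrow> 'a \<Rightarrow> 'a" and g :: "'x \<Rightarrow> 'a"
  assume op: "regular_family (borel_measurable M) \<Phi>"
    and g: "g \<in> borel_measurable M"
  obtain D :: "'a set" where D: "countable D" "\<And>X. open X \<Longrightarrow> X \<noteq> {} \<Longrightarrow> \<exists>d\<in>D. d \<in> X"
    using countable_dense_setE by blast
  have "D \<noteq> {}" using D(2)[of UNIV] by auto
  define d where "d = from_nat_into D"
  have rd: "range d = D" unfolding d_def using \<open>D \<noteq> {}\<close> D(1) by simp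
  have ex: "\<exists>i. dist x (d i) < 1 / real (Suc n)" for x n
    using D(2)[of "ball x (1 / real (Suc n))"] rd by (auto simp: dist_commute)
  define h where "h n p = (LEAST i. dist (g p) (d i) < 1 / real (Suc n))" for n p
  have hd: "dist (g p) (d (h n p)) < 1 / real (Suc n)" for n p
    unfolding h_def by (rule LeastI_ex[OF ex])
  have fm: "(\<lambda>p. \<Phi> p (d (h n p))) \<in> borel_measurable M" for n
  proof (rule measurable_compose_countable[where f="\<lambda>i p. \<Phi> p (d i)" and g="h n"])
    show "\<And>i. (\<lambda>p. \<Phi> p (d i)) \<in> borel_measurable M" using op by (simp add: regular_family_def)
    show "h n \<in> measurable M (count_space UNIV)"
      unfolding h_def by (rule measurable_Least) (use g in measurable)
  qed
  show "(\<lambda>p. \<Phi> p (g p)) \<in> borel_measurable M"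
  proof (rule borel_measurable_LIMSEQ_metric[OF fm])
    fix p
    have "norm (dist (\<Phi> p (d (h n p))) (\<Phi> p (g p))) \<le> 1 / real (Suc n)" for n
    proof -
      have "dist (\<Phi> p (d (h n p))) (\<Phi> p (g p)) \<le> dist (d (h n p)) (g p)"
        using op by (simp add: regular_family_def)
      then show ?thesis using hd[of p n] by (simp add: dist_commute)
    qed
    then have "(\<lambda>n. dist (\<Phi> p (d (h n p))) (\<Phi> p (g p))) \<longlonglongrightarrow> 0"
      by (rule Lim_null_comparison[OF always_eventually[OF allI]]) (rule LIMSEQ_Suc[OF lim_const_over_n])
    then show "(\<lambda>n. \<Phi> p (d (h n p))) \<longlonglongrightarrow> \<Phi> p (g p)"
      by (rule tendsto_dist_iff[THEN iffD2])
  qed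
qed

text \<open>Continuity is stable: split \<open>\<Phi>\<^sub>p(g p) - \<Phi>\<^sub>p\<^sub>0(g p\<^sub>0)\<close> at \<open>\<Phi>\<^sub>p(g p\<^sub>0)\<close>.\<close>

lemma stable_continuous_functions:
  "stable_class (continuous_functions :: ('x::topological_space \<Rightarrow> 'a::metric_space) set)"
  unfolding stable_class_def
proof (intro allI impI, elim conjE)
  fix \<Phi> :: "'x \<Rightarrow> 'a \<Rightarrow> 'a" and g :: "'x \<Rightarrow> 'a"
  assume op: "regular_family continuous_functions \<Phi>" and "g \<in> continuous_functions"
  then have g: "continuous_on UNIV g" by (simp add: continuous_functions_def)
  show "(\<lambda>p. \<Phi> p (g p)) \<in> continuous_functions"
    unfolding continuous_functions_def mem_Collect_eq continuous_on_def
  proof (intro ballI)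
    fix p0 :: 'x assume "p0 \<in> UNIV"
    have c1: "((\<lambda>p. \<Phi> p (g p0)) \<longlongrightarrow> \<Phi> p0 (g p0)) (at p0)"
      using op unfolding regular_family_def continuous_functions_def continuous_on_def by auto
    have c2: "(g \<longlongrightarrow> g p0) (at p0)" using g unfolding continuous_on_def by auto
    show "((\<lambda>p. \<Phi> p (g p)) \<longlongrightarrow> \<Phi> p0 (g p0)) (at p0 within UNIV)"
      unfolding tendsto_iff
    proof (intro allI impI)
      fix e :: real assume e: "e > 0"
      have "eventually (\<lambda>p. dist (\<Phi> p (g p0)) (\<Phi> p0 (g p0)) < e/2) (at p0)"
        using c1 e unfolding tendsto_iff by (meson half_gt_zero)
      moreover have "eventually (\<lambda>p. dist (g p) (g p0) < e/2) (at p0)"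
        using c2 e unfolding tendsto_iff by (meson half_gt_zero)
      ultimately show "eventually (\<lambda>p. dist (\<Phi> p (g p)) (\<Phi> p0 (g p0)) < e) (at p0 within UNIV)"
      proof eventually_elim
        case (elim p)
        have "dist (\<Phi> p (g p)) (\<Phi> p0 (g p0)) \<le> dist (\<Phi> p (g p)) (\<Phi> p (g p0)) + dist (\<Phi> p (g p0)) (\<Phi> p0 (g p0))"
          by (rule dist_triangle)
        also have "dist (\<Phi> p (g p)) (\<Phi> p (g p0)) \<le> dist (g p) (g p0)"
          using op by (simp add: regular_family_def)
        finally show ?case using elim by simp
      qed
    qed
  qed
qed

lemma regular_family_comp:
  assumes C: "stable_class C" and \<Phi>: "regular_family C \<Phi>" and \<Psi>: "regular_family C \<Psi>"
  shows "regular_family C (\<lambda>p. \<Phi> p \<circ> \<Psi> p)"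
  unfolding regular_family_def
proof (intro conjI allI)
  show "(\<lambda>p. (\<Phi> p \<circ> \<Psi> p) B) \<in> C" for B
    using stable_classD[OF C \<Phi>, of "\<lambda>p. \<Psi> p B"] \<Psi> by (simp add: regular_family_def)
  show "dist ((\<Phi> p \<circ> \<Psi> p) x) ((\<Phi> p \<circ> \<Psi> p) y) \<le> dist x y" for p x y
    using \<Phi> \<Psi> unfolding regular_family_def by (metis comp_apply order_trans)
qed

lemma regular_family_precomp:
  "(\<And>g. g \<in> C \<Longrightarrow> g \<circ> h \<in> D) \<Longrightarrow> regular_family C \<Phi> \<Longrightarrow> regular_family D (\<lambda>q. \<Phi> (h q))"
  unfolding regular_family_def by (auto simp: o_def)

lemma borel_measurable_precomp:
  "continuous_on UNIV h \<Longrightarrow> g \<in> borel_measurable borel \<Longrightarrow> g \<circ> h \<in> borel_measurable borel"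
  using borel_measurable_continuous_onI measurable_comp by blast

lemma continuous_functions_precomp:
  "continuous_on UNIV h \<Longrightarrow> g \<in> continuous_functions \<Longrightarrow> g \<circ> h \<in> continuous_functions"
  unfolding continuous_functions_def o_def by (auto intro: continuous_on_compose2[where t=UNIV])

definition regular_mult_family :: "('x \<Rightarrow> 'a) set \<Rightarrow> ('x \<Rightarrow> 'a::cstar_algebra multiplier) \<Rightarrow> bool" where
  "regular_mult_family C m \<longleftrightarrow> regular_family C (\<lambda>p. fst (m p)) \<and> regular_family C (\<lambda>p. snd (m p))"

text \<open>Extending an automorphism to multipliers conjugates by it, so both the family and its
  pointwise inverse have to be regular.\<close>

definition regular_aut_family :: "('x \<Rightarrow> 'a) set \<Rightarrow> ('x \<Rightarrow> 'a::cstar_algebra \<Rightarrow> 'a) \<Rightarrow> bool" where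
  "regular_aut_family C f \<longleftrightarrow> regular_family C f \<and> regular_family C (\<lambda>p. inv (f p))"

lemma regular_aut_family_regular: "regular_aut_family C f \<Longrightarrow> regular_family C f"
  by (simp add: regular_aut_family_def)

text \<open>Automorphisms and unitary multipliers are nonexpansive, so regularity only requires the orbit
  maps to lie in the class; regular multiplier families are closed under products and under
  the action of regular automorphism families.\<close>

lemma regular_family_aut:
  "(\<And>B. (\<lambda>p. f p B) \<in> C) \<Longrightarrow> (\<And>p. is_aut (f p)) \<Longrightarrow> regular_family C f"
  unfolding regular_family_def by (auto simp: is_aut_iff intro: star_hom_lipschitz)

lemma regular_mult_family_unitary:
  "(\<And>B. (\<lambda>p. fst (m p) B) \<in> C) \<Longrightarrow> (\<And>B. (\<lambda>p. snd (m p) B) \<in> C) \<Longrightarrow> (\<And>p. unitary_mult (m p))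
    \<Longrightarrow> regular_mult_family C m"
  unfolding regular_mult_family_def regular_family_def
  by (auto intro: unitary_left_lipschitz unitary_right_lipschitz)

lemma regular_mult_family_mmult:
  "stable_class C \<Longrightarrow> regular_mult_family C m \<Longrightarrow> regular_mult_family C n
    \<Longrightarrow> regular_mult_family C (\<lambda>p. mmult (m p) (n p))"
  unfolding regular_mult_family_def mmult_def by (simp add: regular_family_comp)

lemma regular_mult_family_aut_ext:
  "stable_class C \<Longrightarrow> regular_aut_family C f \<Longrightarrow> regular_mult_family C m
    \<Longrightarrow> regular_mult_family C (\<lambda>p. aut_ext (f p) (m p))"
  unfolding regular_mult_family_def regular_aut_family_def aut_ext_def
  by (simp add: regular_family_comp comp_assoc)

lemma regular_mult_family_precomp:
  "(\<And>g. g \<in> C \<Longrightarrow> g \<circ> h \<in> D) \<Longrightarrow> regular_mult_family C m \<Longrightarrow> regular_mult_family D (\<lambda>q. m (h q))"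
  unfolding regular_mult_family_def
  using regular_family_precomp[of C h D "\<lambda>p. fst (m p)"] regular_family_precomp[of C h D "\<lambda>p. snd (m p)"]
  by simp

lemma regular_aut_family_precomp:
  "(\<And>g. g \<in> C \<Longrightarrow> g \<circ> h \<in> D) \<Longrightarrow> regular_aut_family C f \<Longrightarrow> regular_aut_family D (\<lambda>q. f (h q))"
  unfolding regular_aut_family_def
  using regular_family_precomp[of C h D f] regular_family_precomp[of C h D "\<lambda>p. inv (f p)"]
  by simp

text \<open>In a twisted action, \<open>a\<^sub>\<theta> a\<^sub>-\<^sub>\<theta> = ad \<alpha>(\<theta>,-\<theta>)\<close>, so the inverse of \<open>a\<^sub>\<theta>\<close> is expressed through
  the action itself: \<open>a\<^sub>\<theta>\<^sup>-\<^sup>1 = a\<^sub>-\<^sub>\<theta> \<circ> ad \<alpha>(\<theta>,-\<theta>)\<^sup>*\<close>.\<close>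

lemma twisted_action_inv:
  assumes t: "twisted_action a \<alpha>"
  shows "inv (a \<theta>) = a (- \<theta>) \<circ> (cstar \<circ> (snd (\<alpha> \<theta> (- \<theta>)) \<circ> (cstar \<circ> snd (\<alpha> \<theta> (- \<theta>)))))"
proof -
  define u where "u = \<alpha> \<theta> (- \<theta>)"
  have u: "unitary_mult u" and aut: "is_aut (a \<theta>)"
    using t unfolding u_def by (simp_all add: twisted_action_def)
  have "a \<theta> \<circ> a (- \<theta>) = ad u" using t unfolding u_def by (simp add: twisted_action_def)
  then have right_inv: "a \<theta> \<circ> (a (- \<theta>) \<circ> ad (mstar u)) = id"
    using ad_unitary_inv(1)[OF u] by (simp add: comp_assoc[symmetric])
  have inj: "inj (a \<theta>)" using aut by (simp add: is_aut_def bij_is_inj)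
  have "inv (a \<theta>) = (inv (a \<theta>) \<circ> a \<theta>) \<circ> (a (- \<theta>) \<circ> ad (mstar u))"
    by (simp only: comp_assoc right_inv comp_id)
  also have "\<dots> = a (- \<theta>) \<circ> ad (mstar u)" using inj by simp
  finally have "inv (a \<theta>) = a (- \<theta>) \<circ> ad (mstar u)" .
  then show ?thesis unfolding u_def ad_def mstar_mstar by (simp add: mstar_def comp_assoc)
qed

lemma regular_families_of_twisted_action:
  fixes a :: "'k::group_add \<Rightarrow> 'a::cstar_algebra \<Rightarrow> 'a"
  assumes t: "twisted_action a \<alpha>" and C: "stable_class C"
    and const: "\<And>B. (\<lambda>_. B) \<in> C"
    and neg: "\<And>g. g \<in> C \<Longrightarrow> g \<circ> (\<lambda>\<theta>. - \<theta>) \<in> C"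
    and diag: "\<And>g. g \<in> D \<Longrightarrow> g \<circ> (\<lambda>\<theta>. (\<theta>, - \<theta>)) \<in> C"
    and orbit: "\<And>B. (\<lambda>x. a x B) \<in> C"
    and orbit_L: "\<And>B. (\<lambda>s. fst (\<alpha> (fst s) (snd s)) B) \<in> D"
    and orbit_R: "\<And>B. (\<lambda>s. snd (\<alpha> (fst s) (snd s)) B) \<in> D"
  shows "regular_aut_family C a" and "regular_mult_family D (\<lambda>s. \<alpha> (fst s) (snd s))"
proof -
  have aut: "is_aut (a x)" and u: "unitary_mult (\<alpha> x y)" for x y
    using t by (simp_all add: twisted_action_def)
  have fam: "regular_family C a" by (rule regular_family_aut[OF orbit aut])
  show \<alpha>: "regular_mult_family D (\<lambda>s. \<alpha> (fst s) (snd s))"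
    by (rule regular_mult_family_unitary[OF orbit_L orbit_R u])
  have R: "regular_family C (\<lambda>\<theta>. snd (\<alpha> \<theta> (- \<theta>)))"
    using regular_family_precomp[OF diag, of D "\<lambda>s. snd (\<alpha> (fst s) (snd s))"] \<alpha>
    by (simp add: regular_mult_family_def)
  have star: "regular_family C (\<lambda>_. cstar)"
    unfolding regular_family_def dist_norm by (simp add: const cstar_diff[symmetric])
  have "regular_family C (\<lambda>\<theta>. a (- \<theta>) \<circ> (cstar \<circ> (snd (\<alpha> \<theta> (- \<theta>)) \<circ> (cstar \<circ> snd (\<alpha> \<theta> (- \<theta>))))))"
    by (intro regular_family_comp C regular_family_precomp[OF neg fam, simplified] star R)
  then show "regular_aut_family C a"
    using fam by (simp add: regular_aut_family_def twisted_action_inv[OF t])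
qed

lemma measurable_twisted_action_regular:
  fixes a :: "'k::lcsc_group \<Rightarrow> 'a::cstar_algebra \<Rightarrow> 'a"
  assumes "measurable_twisted_action a \<alpha>"
  shows "regular_aut_family (borel_measurable borel) a"
    and "regular_mult_family (borel_measurable borel) (\<lambda>s. \<alpha> (fst s) (snd s))"
proof -
  note families = regular_families_of_twisted_action[where C="borel_measurable borel" and D="borel_measurable borel",
      OF _ stable_borel_measurable measurable_const borel_measurable_precomp borel_measurable_precomp]
  show "regular_aut_family (borel_measurable borel) a"
    and "regular_mult_family (borel_measurable borel) (\<lambda>s. \<alpha> (fst s) (snd s))"
    using assms
    by (auto intro!: families continuous_intros
        simp: measurable_twisted_action_def strongly_measurable_def strictly_measurable_def case_prod_beta)
qed

lemma continuous_twisted_action_regular: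
  fixes a :: "'k::lcsc_group \<Rightarrow> 'a::cstar_algebra \<Rightarrow> 'a"
  assumes "continuous_twisted_action a \<alpha>"
  shows "regular_aut_family continuous_functions a"
    and "regular_mult_family continuous_functions (\<lambda>s. \<alpha> (fst s) (snd s))"
proof -
  have const: "(\<lambda>_. B) \<in> continuous_functions" for B :: 'a
    by simp
  note families = regular_families_of_twisted_action[where C=continuous_functions and D=continuous_functions,
      OF _ stable_continuous_functions const continuous_functions_precomp continuous_functions_precomp]
  show "regular_aut_family continuous_functions a"
    and "regular_mult_family continuous_functions (\<lambda>s. \<alpha> (fst s) (snd s))"
    using assms
    by (auto intro!: families continuous_intros
        simp: continuous_twisted_action_def strongly_continuous_def strictly_continuous_def case_prod_beta)
qed

lemma regular_family_prod_act:
  "stable_class C \<Longrightarrow> regular_family C (\<lambda>p. ta (snd p)) \<Longrightarrow> regular_family C (\<lambda>p. a (fst p))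
    \<Longrightarrow> regular_family C (prod_act a ta)"
  unfolding prod_act_def by (rule regular_family_comp)

lemma regular_mult_family_prod_cocycle:
  assumes "stable_class C"
    and "regular_aut_family C (\<lambda>t. ta (snd (fst t)))"
    and "regular_aut_family C (\<lambda>t. ta (snd (fst t) + snd (snd t)))"
    and "regular_mult_family C (\<lambda>t. \<kappa> (fst (fst t)) (snd (snd t)))"
    and "regular_mult_family C (\<lambda>t. \<alpha>t (snd (fst t)) (snd (snd t)))"
    and "regular_mult_family C (\<lambda>t. \<alpha> (fst (fst t)) (fst (snd t)))"
  shows "regular_mult_family C (\<lambda>t. prod_cocycle \<alpha> ta \<alpha>t \<kappa> (fst t) (snd t))"
  unfolding prod_cocycle_def by (intro regular_mult_family_mmult regular_mult_family_aut_ext assms)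

lemma reindexing_continuous:
  "continuous_on UNIV (fst :: 'g::topological_space \<times> 'h::topological_monoid_add \<Rightarrow> 'g)"
  "continuous_on UNIV (snd :: 'g \<times> 'h \<Rightarrow> 'h)"
  "continuous_on UNIV (\<lambda>t::('g \<times> 'h) \<times> ('g \<times> 'h). snd (fst t))"
  "continuous_on UNIV (\<lambda>t::('g \<times> 'h) \<times> ('g \<times> 'h). snd (fst t) + snd (snd t))"
  "continuous_on UNIV (\<lambda>t::('g \<times> 'h) \<times> ('g \<times> 'h). (fst (fst t), snd (snd t)))"
  "continuous_on UNIV (\<lambda>t::('g \<times> 'h) \<times> ('g \<times> 'h). (snd (fst t), snd (snd t)))"
  "continuous_on UNIV (\<lambda>t::('g \<times> 'h) \<times> ('g \<times> 'h). (fst (fst t), fst (snd t)))"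
  by (intro continuous_intros)+

text \<open>Measurable case: every constituent is reindexed along a continuous map of the product
  group, which preserves Borel measurability; \<open>\<kappa>\<close> is even strictly continuous.\<close>

lemma measurable_prod_twisted_action:
  fixes a :: "'g::lcsc_group \<Rightarrow> 'a::cstar_algebra \<Rightarrow> 'a" and ta :: "'h::lcsc_group \<Rightarrow> 'a \<Rightarrow> 'a"
  assumes cs: "covariant_structure a \<alpha> ta \<alpha>t \<kappa>"
  shows "measurable_twisted_action (prod_act a ta) (prod_cocycle \<alpha> ta \<alpha>t \<kappa>)"
proof -
  note pre = reindexing_continuous[THEN borel_measurable_precomp]
  have m: "measurable_twisted_action a \<alpha>" "measurable_twisted_action ta \<alpha>t"
    using cs by (simp_all add: covariant_structure_def)
  note fam_a = measurable_twisted_action_regular[OF m(1)]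
    and fam_ta = measurable_twisted_action_regular[OF m(2)]
  have fam_\<kappa>: "regular_mult_family (borel_measurable borel) (\<lambda>s. \<kappa> (fst s) (snd s))"
    using cs unitary_\<kappa>[OF cs]
    by (intro regular_mult_family_unitary borel_measurable_continuous_onI)
       (auto simp: covariant_structure_def strictly_continuous_def case_prod_beta)
  have "regular_family (borel_measurable borel) (prod_act a ta)"
    using regular_family_precomp[OF pre(2) regular_aut_family_regular[OF fam_ta(1)]]
      regular_family_precomp[OF pre(1) regular_aut_family_regular[OF fam_a(1)]]
    by (rule regular_family_prod_act[OF stable_borel_measurable])
  moreover have "regular_mult_family (borel_measurable borel) (\<lambda>t. prod_cocycle \<alpha> ta \<alpha>t \<kappa> (fst t) (snd t))"
    using regular_aut_family_precomp[OF pre(3) fam_ta(1)] regular_aut_family_precomp[OF pre(4) fam_ta(1)]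
      regular_mult_family_precomp[OF pre(5) fam_\<kappa>] regular_mult_family_precomp[OF pre(6) fam_ta(2)]
      regular_mult_family_precomp[OF pre(7) fam_a(2)]
    by (intro regular_mult_family_prod_cocycle stable_borel_measurable) simp_all
  ultimately show ?thesis
    using prod_twisted_action[OF cs]
    by (simp add: measurable_twisted_action_def strongly_measurable_def strictly_measurable_def
        regular_family_def regular_mult_family_def case_prod_beta)
qed

lemma continuous_prod_twisted_action:
  fixes a :: "'g::lcsc_group \<Rightarrow> 'a::cstar_algebra \<Rightarrow> 'a" and ta :: "'h::lcsc_group \<Rightarrow> 'a \<Rightarrow> 'a"
  assumes cs: "covariant_structure a \<alpha> ta \<alpha>t \<kappa>"
    and c: "continuous_twisted_action a \<alpha>" "continuous_twisted_action ta \<alpha>t"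
  shows "continuous_twisted_action (prod_act a ta) (prod_cocycle \<alpha> ta \<alpha>t \<kappa>)"
proof -
  note pre = reindexing_continuous[THEN continuous_functions_precomp]
  note fam_a = continuous_twisted_action_regular[OF c(1)]
    and fam_ta = continuous_twisted_action_regular[OF c(2)]
  have fam_\<kappa>: "regular_mult_family continuous_functions (\<lambda>s. \<kappa> (fst s) (snd s))"
    using cs unitary_\<kappa>[OF cs]
    by (intro regular_mult_family_unitary)
       (auto simp: covariant_structure_def strictly_continuous_def case_prod_beta)
  have "regular_family continuous_functions (prod_act a ta)"
    using regular_family_precomp[OF pre(2) regular_aut_family_regular[OF fam_ta(1)]]
      regular_family_precomp[OF pre(1) regular_aut_family_regular[OF fam_a(1)]]
    by (rule regular_family_prod_act[OF stable_continuous_functions])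
  moreover have "regular_mult_family continuous_functions (\<lambda>t. prod_cocycle \<alpha> ta \<alpha>t \<kappa> (fst t) (snd t))"
    using regular_aut_family_precomp[OF pre(3) fam_ta(1)] regular_aut_family_precomp[OF pre(4) fam_ta(1)]
      regular_mult_family_precomp[OF pre(5) fam_\<kappa>] regular_mult_family_precomp[OF pre(6) fam_ta(2)]
      regular_mult_family_precomp[OF pre(7) fam_a(2)]
    by (intro regular_mult_family_prod_cocycle stable_continuous_functions) simp_all
  ultimately show ?thesis
    using prod_twisted_action[OF cs]
    by (simp add: continuous_twisted_action_def strongly_continuous_def strictly_continuous_def
        regular_family_def regular_mult_family_def case_prod_beta)
qed

theorem proposition3p1:
  fixes a :: "'g::lcsc_group \<Rightarrow> 'a::cstar_algebra \<Rightarrow> 'a"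
    and \<alpha> :: "'g \<Rightarrow> 'g \<Rightarrow> 'a multiplier"
    and ta :: "'h::lcsc_group \<Rightarrow> 'a \<Rightarrow> 'a"
    and \<alpha>t :: "'h \<Rightarrow> 'h \<Rightarrow> 'a multiplier"
    and \<kappa> :: "'g \<Rightarrow> 'h \<Rightarrow> 'a multiplier"
  assumes "covariant_structure a \<alpha> ta \<alpha>t \<kappa>"
  shows "measurable_twisted_action (prod_act a ta) (prod_cocycle \<alpha> ta \<alpha>t \<kappa>)
         \<and> (continuous_twisted_action a \<alpha> \<and> continuous_twisted_action ta \<alpha>t
            \<longrightarrow> continuous_twisted_action (prod_act a ta) (prod_cocycle \<alpha> ta \<alpha>t \<kappa>))"
  using measurable_prod_twisted_action[OF assms] continuous_prod_twisted_action[OF assms] by blast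

end
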